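(* Consider the ride-hailing model in the context with $L=2$ regions and driving cost rate $c=0$. For every such two-region network (arbitrary demand rates, trip times, $R\in(0,1)$, $M\ge0$, $N>0$) and every AV-first strategy $\hat{\bm x}^A$, the AV-first profit $\sum_{i,\alpha}r^A_{i\alpha}\hat x^A_{i\alpha}+\pi(\hat{\bm b}^C)$ is at least $\tfrac45$ times the optimal value of $\mathcal{OPT}$, i.e. the performance loss $1-(\text{AV-first profit})/(\text{optimal value})$ is at most $20\%$; and $20\%$ is the maximum (supremum) performance loss over all such networks.
   Context: Model. There are $L$ regions $\{1,\dots,L\}$. For regions $i,j$, $b_{ij}\ge0$ is the customer rate from $i$ to $j$; $b_i=\sum_j b_{ij}$ (assumed $>0$), $q_{ij}=b_{ij}/b_i$. $t_{ij}\ge0$ is the trip time of a customer trip from $i$ to $j$ (with $t_{ij}>0$ for $i\ne j$); the empty repositioning time from $i$ to $\alpha$ is $t_{i\alpha}$ for $\alpha\ne i$ and $0$ for $\alpha=i$. Constants: $p>0$, $c\ge0$, $R\in(0,1)$, CV fleet mass $N>0$, AV fleet mass $M\ge0$. For $i,\alpha$: $\tau^{dr}_{i\alpha}=\mathbf 1[\alpha\ne i]\,t_{i\alpha}+\sum_j q_{\alpha j}t_{\alpha j}$, $r^A_{i\alpha}=p\sum_j q_{\alpha j}t_{\alpha j}-c\tau^{dr}_{i\alpha}$, $r^C_{i\alpha}=p(1-R)\sum_j q_{\alpha j}t_{\alpha j}-c\tau^{dr}_{i\alpha}$, $r^{C2P}_{i\alpha}=pR\sum_j q_{\alpha j}t_{\alpha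 j}$. A matrix $\bm x\in\mathbb R^{L\times L}_{\ge0}$ satisfies flow balance if $\sum_j(\sum_k x_{kj})q_{ji}=\sum_\alpha x_{i\alpha}$ for all $i$. $\mathcal{CV}(\bm b^C)$: maximize $N\log\sum_{i,\alpha}r^C_{i\alpha}x_{i\alpha}-\sum_{i,\alpha}\tau^{dr}_{i\alpha}x_{i\alpha}$ over $\bm x\ge0$ satisfying flow balance and $\sum_j x_{ji}\le b^C_i$ for all $i$; $\pi(\bm b^C)=\sum_{i,\alpha}r^{C2P}_{i\alpha}x_{i\alpha}$ for an optimal solution $\bm x$ (same for all optimal solutions). $\mathcal{OPT}$: maximize $\sum_{i,\alpha}r^A_{i\alpha}x^A_{i\alpha}+\pi(\bm b^C)$ over $\bm b^C\in\mathbb R^L_{\ge0}$, $\bm x^A\in\mathbb R^{L\times L}_{\ge0}$ subject to $\sum_j x^A_{ji}+b^C_i\le b_i$ for all $i$, flow balance for $\bm x^A$, and $\sum_{i,\alpha}\tau^{dr}_{i\alpha}x^A_{i\alpha}\le M$. AV-first policy: an AV-first strategy $\hat{\bm x}^A$ maximizes $\sum_{i,\alpha}r^A_{i\alpha}x^A_{i\alpha}$ over $\bm x^A\ge0$ with $\sum_j x^A_{ji}\le b_i$ for all $i$, flow balance, and $\sum_{i,\alpha}\tau^{dr}_{i\alpha}x^A_{i\alpha}\le M$; the residual demand $\hat b^C_i=b_i-\sum_j\hat x^A_{ji}$ is revealed to CVs, and the AV-first profit is $\sum_{i,\alpha}r^A_{i\alpha}\hat x^A_{i\alpha}+\pi(\hat{\bm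 b}^C)$. *)

theory Defs
  imports Complex_Main "HOL-Library.Extended_Real"
begin

text \<open>Matrices are functions nat => nat => real;
only their values on regions matter. Parameters: b (customer rates), t (trip times),
p, c, R, N (CV fleet mass), M (AV fleet mass).\<close>

definition regs :: "nat \<Rightarrow> nat set" where
  "regs L = {0..<L}"

definition brow :: "nat \<Rightarrow> (nat \<Rightarrow> nat \<Rightarrow> real) \<Rightarrow> nat \<Rightarrow> real" where
  "brow L b i = (\<Sum>j\<in>regs L. b i j)"

definition qq :: "nat \<Rightarrow> (nat \<Rightarrow> nat \<Rightarrow> real) \<Rightarrow> nat \<Rightarrow> nat \<Rightarrow> real" where
  "qq L b i j = b i j / brow L b i"

definition meantrip :: "nat \<Rightarrow> (nat \<Rightarrow> nat \<Rightarrow> real) \<Rightarrow> (nat \<Rightarrow> nat \<Rightarrow> real) \<Rightarrow> nat \<Rightarrow> real" where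
  "meantrip L b t a = (\<Sum>j\<in>regs L. qq L b a j * t a j)"

definition tau_dr :: "nat \<Rightarrow> (nat \<Rightarrow> nat \<Rightarrow> real) \<Rightarrow> (nat \<Rightarrow> nat \<Rightarrow> real) \<Rightarrow> nat \<Rightarrow> nat \<Rightarrow> real" where
  "tau_dr L b t i a = (if a \<noteq> i then t i a else 0) + meantrip L b t a"

definition rA :: "nat \<Rightarrow> (nat \<Rightarrow> nat \<Rightarrow> real) \<Rightarrow> (nat \<Rightarrow> nat \<Rightarrow> real) \<Rightarrow> real \<Rightarrow> real \<Rightarrow> nat \<Rightarrow> nat \<Rightarrow> real" where
  "rA L b t p c i a = p * meantrip L b t a - c * tau_dr L b t i a"

definition rC :: "nat \<Rightarrow> (nat \<Rightarrow> nat \<Rightarrow> real) \<Rightarrow> (nat \<Rightarrow> nat \<Rightarrow> real) \<Rightarrow> real \<Rightarrow> real \<Rightarrow> real \<Rightarrow> nat \<Rightarrow> nat \<Rightarrow> real" where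
  "rC L b t p c R i a = p * (1 - R) * meantrip L b t a - c * tau_dr L b t i a"

definition rC2P :: "nat \<Rightarrow> (nat \<Rightarrow> nat \<Rightarrow> real) \<Rightarrow> (nat \<Rightarrow> nat \<Rightarrow> real) \<Rightarrow> real \<Rightarrow> real \<Rightarrow> nat \<Rightarrow> nat \<Rightarrow> real" where
  "rC2P L b t p R i a = p * R * meantrip L b t a"

definition wsum :: "nat \<Rightarrow> (nat \<Rightarrow> nat \<Rightarrow> real) \<Rightarrow> (nat \<Rightarrow> nat \<Rightarrow> real) \<Rightarrow> real" where
  "wsum L r x = (\<Sum>i\<in>regs L. \<Sum>a\<in>regs L. r i a * x i a)"

definition nonneg :: "nat \<Rightarrow> (nat \<Rightarrow> nat \<Rightarrow> real) \<Rightarrow> bool" where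
  "nonneg L x \<longleftrightarrow> (\<forall>i\<in>regs L. \<forall>a\<in>regs L. 0 \<le> x i a)"

definition flow_balance :: "nat \<Rightarrow> (nat \<Rightarrow> nat \<Rightarrow> real) \<Rightarrow> (nat \<Rightarrow> nat \<Rightarrow> real) \<Rightarrow> bool" where
  "flow_balance L b x \<longleftrightarrow>
     (\<forall>i\<in>regs L. (\<Sum>j\<in>regs L. (\<Sum>k\<in>regs L. x k j) * qq L b j i) = (\<Sum>a\<in>regs L. x i a))"

definition valid_network ::
  "nat \<Rightarrow> (nat \<Rightarrow> nat \<Rightarrow> real) \<Rightarrow> (nat \<Rightarrow> nat \<Rightarrow> real) \<Rightarrow> real \<Rightarrow> real \<Rightarrow> real \<Rightarrow> real \<Rightarrow> real \<Rightarrow> bool" where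
  "valid_network L b t p c R N M \<longleftrightarrow>
     (\<forall>i\<in>regs L. \<forall>j\<in>regs L. 0 \<le> b i j) \<and> (\<forall>i\<in>regs L. 0 < brow L b i) \<and>
     (\<forall>i\<in>regs L. \<forall>j\<in>regs L. 0 \<le> t i j) \<and> (\<forall>i\<in>regs L. \<forall>j\<in>regs L. i \<noteq> j \<longrightarrow> 0 < t i j) \<and>
     0 < p \<and> 0 \<le> c \<and> 0 < R \<and> R < 1 \<and> 0 < N \<and> 0 \<le> M"

definition cv_feasible :: "nat \<Rightarrow> (nat \<Rightarrow> nat \<Rightarrow> real) \<Rightarrow> (nat \<Rightarrow> real) \<Rightarrow> (nat \<Rightarrow> nat \<Rightarrow> real) \<Rightarrow> bool" where
  "cv_feasible L b bC x \<longleftrightarrow> nonneg L x \<and> flow_balance L b x \<and>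
     (\<forall>i\<in>regs L. (\<Sum>j\<in>regs L. x j i) \<le> bC i)"

definition cv_obj ::
  "nat \<Rightarrow> (nat \<Rightarrow> nat \<Rightarrow> real) \<Rightarrow> (nat \<Rightarrow> nat \<Rightarrow> real) \<Rightarrow> real \<Rightarrow> real \<Rightarrow> real \<Rightarrow> real \<Rightarrow> (nat \<Rightarrow> nat \<Rightarrow> real) \<Rightarrow> ereal" where
  "cv_obj L b t p c R N x =
     (if 0 < wsum L (rC L b t p c R) x
      then ereal (N * ln (wsum L (rC L b t p c R) x) - wsum L (tau_dr L b t) x)
      else -\<infinity>)"

definition cv_optimal ::
  "nat \<Rightarrow> (nat \<Rightarrow> nat \<Rightarrow> real) \<Rightarrow> (nat \<Rightarrow> nat \<Rightarrow> real) \<Rightarrow> real \<Rightarrow> real \<Rightarrow> real \<Rightarrow> real \<Rightarrow> (nat \<Rightarrow> real) \<Rightarrow> (nat \<Rightarrow> nat \<Rightarrow> real) \<Rightarrow> bool" where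
  "cv_optimal L b t p c R N bC x \<longleftrightarrow> cv_feasible L b bC x \<and>
     (\<forall>y. cv_feasible L b bC y \<longrightarrow> cv_obj L b t p c R N y \<le> cv_obj L b t p c R N x)"

text \<open>pi(b^C): platform revenue from CVs at an optimal solution (the same for all optimal solutions).\<close>
definition cv_pi ::
  "nat \<Rightarrow> (nat \<Rightarrow> nat \<Rightarrow> real) \<Rightarrow> (nat \<Rightarrow> nat \<Rightarrow> real) \<Rightarrow> real \<Rightarrow> real \<Rightarrow> real \<Rightarrow> real \<Rightarrow> (nat \<Rightarrow> real) \<Rightarrow> real" where
  "cv_pi L b t p c R N bC =
     (SOME v. \<exists>x. cv_optimal L b t p c R N bC x \<and> v = wsum L (rC2P L b t p R) x)"

definition opt_feasible ::
  "nat \<Rightarrow> (nat \<Rightarrow> nat \<Rightarrow> real) \<Rightarrow> (nat \<Rightarrow> nat \<Rightarrow> real) \<Rightarrow> real \<Rightarrow> (nat \<Rightarrow> real) \<Rightarrow> (nat \<Rightarrow> nat \<Rightarrow> real) \<Rightarrow> bool" where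
  "opt_feasible L b t M bC xA \<longleftrightarrow>
     (\<forall>i\<in>regs L. 0 \<le> bC i) \<and> nonneg L xA \<and>
     (\<forall>i\<in>regs L. (\<Sum>j\<in>regs L. xA j i) + bC i \<le> brow L b i) \<and>
     flow_balance L b xA \<and> wsum L (tau_dr L b t) xA \<le> M"

definition opt_value ::
  "nat \<Rightarrow> (nat \<Rightarrow> nat \<Rightarrow> real) \<Rightarrow> (nat \<Rightarrow> nat \<Rightarrow> real) \<Rightarrow> real \<Rightarrow> real \<Rightarrow> real \<Rightarrow> real \<Rightarrow> real \<Rightarrow> real" where
  "opt_value L b t p c R N M =
     Sup {wsum L (rA L b t p c) xA + cv_pi L b t p c R N bC | bC xA. opt_feasible L b t M bC xA}"

definition av_feasible ::
  "nat \<Rightarrow> (nat \<Rightarrow> nat \<Rightarrow> real) \<Rightarrow> (nat \<Rightarrow> nat \<Rightarrow> real) \<Rightarrow> real \<Rightarrow> (nat \<Rightarrow> nat \<Rightarrow> real) \<Rightarrow> bool" where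
  "av_feasible L b t M x \<longleftrightarrow> nonneg L x \<and>
     (\<forall>i\<in>regs L. (\<Sum>j\<in>regs L. x j i) \<le> brow L b i) \<and>
     flow_balance L b x \<and> wsum L (tau_dr L b t) x \<le> M"

definition av_first ::
  "nat \<Rightarrow> (nat \<Rightarrow> nat \<Rightarrow> real) \<Rightarrow> (nat \<Rightarrow> nat \<Rightarrow> real) \<Rightarrow> real \<Rightarrow> real \<Rightarrow> real \<Rightarrow> (nat \<Rightarrow> nat \<Rightarrow> real) \<Rightarrow> bool" where
  "av_first L b t p c M x \<longleftrightarrow> av_feasible L b t M x \<and>
     (\<forall>y. av_feasible L b t M y \<longrightarrow> wsum L (rA L b t p c) y \<le> wsum L (rA L b t p c) x)"

definition avfirst_profit ::
  "nat \<Rightarrow> (nat \<Rightarrow> nat \<Rightarrow> real) \<Rightarrow> (nat \<Rightarrow> nat \<Rightarrow> real) \<Rightarrow> real \<Rightarrow> real \<Rightarrow> real \<Rightarrow> real \<Rightarrow> (nat \<Rightarrow> nat \<Rightarrow> real) \<Rightarrow> real" where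
  "avfirst_profit L b t p c R N x =
     wsum L (rA L b t p c) x + cv_pi L b t p c R N (\<lambda>i. brow L b i - (\<Sum>j\<in>regs L. x j i))"

end

theory Submission
  imports Defs "HOL-Analysis.Analysis"
begin

text \<open>With \<open>c = 0\<close> a flow matters only through its pickup rates \<open>s\<close> and \<open>r\<close> in the two
  regions: revenue is the linear function \<open>m0 * s + m1 * r\<close>, and flow balance forces the surplus
  \<open>q01 * s - q10 * r\<close> to be repositioned, which costs at least
  \<open>t10 * (q01 * s - q10 * r)\<^sup>+ + t01 * (q10 * r - q01 * s)\<^sup>+\<close> of driving time, with equality for
  a canonical flow. Both the AV and the CV problem thus become problems on a box in the plane.

  Compare the AV-first solution (AV revenue \<open>A\<close>, CV revenue \<open>C\<close> on the residual demand) with any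
  feasible point of OPT (revenues \<open>A'\<close> and \<open>C'\<close>). AV-first optimality gives \<open>A' \<le> A\<close>, and a
  case analysis on the AV budget gives \<open>A' + C' \<le> 5/4 * (A + C)\<close>; there the lower bounds on \<open>C\<close>
  come from the first-order condition of the concave CV problem. The profits are \<open>p * (A + R * C)\<close>
  and \<open>p * (A' + R * C')\<close>, and interpolating between \<open>R = 0\<close> and \<open>R = 1\<close> yields the ratio 4/5.
  A single network with \<open>R \<rightarrow> 1\<close> shows that 4/5 cannot be improved.\<close>

lemma max_0_convex_combination:
  fixes a b \<theta> :: real
  assumes "0 \<le> \<theta>" "\<theta> \<le> 1"
  shows "max 0 ((1 - \<theta>) * a + \<theta> * b) \<le> (1 - \<theta>) * max 0 a + \<theta> * max 0 b"
proof -
  have "(1 - \<theta>) * a \<le> (1 - \<theta>) * max 0 a" "\<theta> * b \<le> \<theta> * max 0 b"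
    using assms by (auto intro: mult_left_mono)
  moreover have "0 \<le> (1 - \<theta>) * max 0 a" "0 \<le> \<theta> * max 0 b"
    using assms by auto
  ultimately show ?thesis by linarith
qed

lemma convex_combination_in_interval:
  fixes x y \<theta> lo hi :: real
  assumes "lo \<le> x" "x \<le> hi" "lo \<le> y" "y \<le> hi" "0 \<le> \<theta>" "\<theta> \<le> 1"
  shows "lo \<le> (1 - \<theta>) * x + \<theta> * y \<and> (1 - \<theta>) * x + \<theta> * y \<le> hi"
  using convexD_alt[OF convex_real_interval(5), of x lo hi y \<theta>] assms by simp

section \<open>The problem in terms of pickup rates\<close>

text \<open>\<open>m0\<close>, \<open>m1\<close> are the mean customer trip times out of the two regions, \<open>q01\<close>, \<open>q10\<close> the
  fractions of customers travelling to the other region and \<open>t01\<close>, \<open>t10\<close> the repositioning times.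
  In the definitions below \<open>s\<close> and \<open>r\<close> are pickup rates in regions 0 and 1; \<open>revenue\<close> is the
  fare-earning driving time (revenue divided by \<open>p\<close>), and \<open>reposition\<close> the least empty driving time
  of a balanced flow with these pickup rates.\<close>

locale two_region =
  fixes m0 m1 q01 q10 t01 t10 :: real
  assumes m0_nonneg: "0 \<le> m0" and m1_nonneg: "0 \<le> m1"
    and q01_nonneg: "0 \<le> q01" and q10_nonneg: "0 \<le> q10"
    and t01_pos: "0 < t01" and t10_pos: "0 < t10"
    and m0_pos: "0 < q01 \<Longrightarrow> 0 < m0" and m1_pos: "0 < q10 \<Longrightarrow> 0 < m1"
begin

definition revenue :: "real \<Rightarrow> real \<Rightarrow> real" where
  "revenue s r = m0 * s + m1 * r"

definition reposition :: "real \<Rightarrow> real \<Rightarrow> real" where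
  "reposition s r = t10 * max 0 (q01 * s - q10 * r) + t01 * max 0 (q10 * r - q01 * s)"

definition cv_utility :: "real \<Rightarrow> real \<Rightarrow> real \<Rightarrow> real \<Rightarrow> real" where
  "cv_utility N g s r = N * ln (g * revenue s r) - revenue s r - reposition s r"

text \<open>Points of non-positive revenue have CV utility \<open>-\<infinity>\<close>; they do not compete.\<close>

definition cv_opt :: "real \<Rightarrow> real \<Rightarrow> real \<Rightarrow> real \<Rightarrow> real \<Rightarrow> real \<Rightarrow> bool" where
  "cv_opt N g c0 c1 s r \<longleftrightarrow> 0 \<le> s \<and> s \<le> c0 \<and> 0 \<le> r \<and> r \<le> c1 \<and>
     (\<forall>s' r'. 0 \<le> s' \<longrightarrow> s' \<le> c0 \<longrightarrow> 0 \<le> r' \<longrightarrow> r' \<le> c1 \<longrightarrow> 0 < revenue s' r' \<longrightarrow>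
        0 < revenue s r \<and> cv_utility N g s' r' \<le> cv_utility N g s r)"

definition av_opt :: "real \<Rightarrow> real \<Rightarrow> real \<Rightarrow> real \<Rightarrow> real \<Rightarrow> bool" where
  "av_opt B0 B1 M s r \<longleftrightarrow> 0 \<le> s \<and> s \<le> B0 \<and> 0 \<le> r \<and> r \<le> B1 \<and>
     revenue s r + reposition s r \<le> M \<and>
     (\<forall>s' r'. 0 \<le> s' \<longrightarrow> s' \<le> B0 \<longrightarrow> 0 \<le> r' \<longrightarrow> r' \<le> B1 \<longrightarrow>
        revenue s' r' + reposition s' r' \<le> M \<longrightarrow> revenue s' r' \<le> revenue s r)"

lemma revenue_nonneg: "0 \<le> s \<Longrightarrow> 0 \<le> r \<Longrightarrow> 0 \<le> revenue s r"
  unfolding revenue_def using m0_nonneg m1_nonneg by simp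

lemma revenue_mono: "s \<le> s' \<Longrightarrow> r \<le> r' \<Longrightarrow> revenue s r \<le> revenue s' r'"
  unfolding revenue_def using m0_nonneg m1_nonneg by (intro add_mono mult_left_mono)

lemma revenue_0 [simp]: "revenue 0 0 = 0"
  unfolding revenue_def by simp

lemma revenue_diff: "revenue (s - s') (r - r') = revenue s r - revenue s' r'"
  unfolding revenue_def by (simp add: algebra_simps)

lemma reposition_nonneg: "0 \<le> reposition s r"
  unfolding reposition_def using t01_pos t10_pos by simp

lemma reposition_0 [simp]: "reposition 0 0 = 0"
  unfolding reposition_def by simp

lemma reposition_balanced: "q01 * s = q10 * r \<Longrightarrow> reposition s r = 0"
  unfolding reposition_def by simp

lemma reposition_surplus: "q10 * r \<le> q01 * s \<Longrightarrow> reposition s r = t10 * (q01 * s - q10 * r)"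
  unfolding reposition_def by simp

lemma reposition_surplus_le: "t10 * max 0 (q01 * s - q10 * r) \<le> reposition s r"
  unfolding reposition_def using t01_pos by simp

lemma reposition_le_0_imp_balanced:
  assumes "reposition s r \<le> 0"
  shows "q01 * s = q10 * r"
proof -
  have "0 \<le> t10 * max 0 (q01 * s - q10 * r)" "0 \<le> t01 * max 0 (q10 * r - q01 * s)"
    using t01_pos t10_pos by auto
  then have "t10 * max 0 (q01 * s - q10 * r) = 0" "t01 * max 0 (q10 * r - q01 * s) = 0"
    using assms unfolding reposition_def by linarith+
  then show ?thesis
    using t01_pos t10_pos by auto
qed

lemma reposition_convex:
  assumes "0 \<le> \<theta>" "\<theta> \<le> 1"
  shows "reposition ((1 - \<theta>) * s + \<theta> * s') ((1 - \<theta>) * r + \<theta> * r')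
           \<le> (1 - \<theta>) * reposition s r + \<theta> * reposition s' r'"
proof -
  have "q01 * ((1 - \<theta>) * s + \<theta> * s') - q10 * ((1 - \<theta>) * r + \<theta> * r')
        = (1 - \<theta>) * (q01 * s - q10 * r) + \<theta> * (q01 * s' - q10 * r')"
   and "q10 * ((1 - \<theta>) * r + \<theta> * r') - q01 * ((1 - \<theta>) * s + \<theta> * s')
        = (1 - \<theta>) * (q10 * r - q01 * s) + \<theta> * (q10 * r' - q01 * s')"
    by (simp_all add: algebra_simps)
  then show ?thesis
    using mult_left_mono[OF max_0_convex_combination[OF assms, of "q01 * s - q10 * r" "q01 * s' - q10 * r'"],
            of t10]
          mult_left_mono[OF max_0_convex_combination[OF assms, of "q10 * r - q01 * s" "q10 * r' - q01 * s'"],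
            of t01]
          t01_pos t10_pos
    unfolding reposition_def by (simp add: algebra_simps)
qed

lemma cv_opt_box: "cv_opt N g c0 c1 s r \<Longrightarrow> 0 \<le> s \<and> s \<le> c0 \<and> 0 \<le> r \<and> r \<le> c1"
  unfolding cv_opt_def by blast

lemma cv_opt_revenue_pos:
  "cv_opt N g c0 c1 s r \<Longrightarrow> 0 \<le> s' \<Longrightarrow> s' \<le> c0 \<Longrightarrow> 0 \<le> r' \<Longrightarrow> r' \<le> c1 \<Longrightarrow>
    0 < revenue s' r' \<Longrightarrow> 0 < revenue s r"
  unfolding cv_opt_def by blast

lemma cv_opt_utility_le:
  "cv_opt N g c0 c1 s r \<Longrightarrow> 0 \<le> s' \<Longrightarrow> s' \<le> c0 \<Longrightarrow> 0 \<le> r' \<Longrightarrow> r' \<le> c1 \<Longrightarrow>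
    0 < revenue s' r' \<Longrightarrow> cv_utility N g s' r' \<le> cv_utility N g s r"
  unfolding cv_opt_def by blast

text \<open>The CV utility is concave, so along the segment from an optimum to any other point of the box
  its difference quotients give a bound whose limit \<open>\<theta> \<rightarrow> 0\<close> is the first-order condition.\<close>

lemma cv_opt_segment_bound:
  assumes opt: "cv_opt N g c0 c1 s r" and N: "0 \<le> N" and g: "0 < g"
    and s': "0 \<le> s'" "s' \<le> c0" and r': "0 \<le> r'" "r' \<le> c1" and C_pos: "0 < revenue s r"
    and \<theta>: "0 < \<theta>" "\<theta> < 1"
  shows "N * (revenue s' r' - revenue s r) / (revenue s r + \<theta> * (revenue s' r' - revenue s r))
           \<le> revenue s' r' - revenue s r + reposition s' r' - reposition s r"
proof -
  define C D P P' where "C = revenue s r" and "D = revenue s' r' - revenue s r"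
    and "P = reposition s r" and "P' = reposition s' r'"
  define s\<theta> r\<theta> where "s\<theta> = (1 - \<theta>) * s + \<theta> * s'" and "r\<theta> = (1 - \<theta>) * r + \<theta> * r'"
  have box\<theta>: "0 \<le> s\<theta>" "s\<theta> \<le> c0" "0 \<le> r\<theta>" "r\<theta> \<le> c1"
    unfolding s\<theta>_def r\<theta>_def using convex_combination_in_interval cv_opt_box[OF opt] s' r' \<theta> by auto
  have rev\<theta>: "revenue s\<theta> r\<theta> = C + \<theta> * D"
    unfolding s\<theta>_def r\<theta>_def C_def D_def revenue_def by (simp add: algebra_simps)
  have "0 < (1 - \<theta>) * C" "0 \<le> \<theta> * revenue s' r'"
    using \<theta> C_pos revenue_nonneg[OF s'(1) r'(1)] by (auto simp: C_def)
  moreover have "C + \<theta> * D = (1 - \<theta>) * C + \<theta> * revenue s' r'"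
    by (simp add: C_def D_def algebra_simps)
  ultimately have pos\<theta>: "0 < C + \<theta> * D"
    by linarith
  have "cv_utility N g s\<theta> r\<theta> \<le> cv_utility N g s r"
    using cv_opt_utility_le[OF opt box\<theta>] rev\<theta> pos\<theta> by simp
  moreover have "reposition s\<theta> r\<theta> \<le> (1 - \<theta>) * P + \<theta> * P'"
    unfolding s\<theta>_def r\<theta>_def P_def P'_def using \<theta> by (intro reposition_convex) auto
  ultimately have utility: "N * (ln (g * (C + \<theta> * D)) - ln (g * C)) \<le> \<theta> * (D + P' - P)"
    unfolding cv_utility_def rev\<theta> by (simp add: C_def P_def algebra_simps)
  have "ln (g * C) - ln (g * (C + \<theta> * D)) \<le> (g * C - g * (C + \<theta> * D)) / (g * (C + \<theta> * D))"
    using g C_pos pos\<theta> by (intro ln_diff_le) (auto simp: C_def)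
  moreover have "(g * C - g * (C + \<theta> * D)) / (g * (C + \<theta> * D)) = - (\<theta> * D / (C + \<theta> * D))"
    using g pos\<theta> by (simp add: right_diff_distrib[symmetric])
  ultimately have "\<theta> * D / (C + \<theta> * D) \<le> ln (g * (C + \<theta> * D)) - ln (g * C)"
    by linarith
  with utility have "\<theta> * (N * D / (C + \<theta> * D)) \<le> \<theta> * (D + P' - P)"
    using N by (smt (verit) mult_left_mono times_divide_eq_right mult.left_commute)
  then have "N * D / (C + \<theta> * D) \<le> D + P' - P"
    using mult_le_cancel_left_pos[OF \<theta>(1)] by blast
  then show ?thesis
    by (simp only: C_def D_def P_def P'_def)
qed

lemma cv_opt_first_order:
  assumes opt: "cv_opt N g c0 c1 s r" and N: "0 \<le> N" and g: "0 < g"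
    and s': "0 \<le> s'" "s' \<le> c0" and r': "0 \<le> r'" "r' \<le> c1" and C_pos: "0 < revenue s r"
  shows "(N - revenue s r) * (revenue s' r' - revenue s r)
           \<le> revenue s r * (reposition s' r' - reposition s r)"
proof -
  define C D P P' where "C = revenue s r" and "D = revenue s' r' - revenue s r"
    and "P = reposition s r" and "P' = reposition s' r'"
  have "((\<lambda>\<theta>. N * D / (C + \<theta> * D)) \<longlongrightarrow> N * D / (C + 0 * D)) (at_right 0)"
    using C_pos by (intro tendsto_intros) (auto simp: C_def)
  moreover have "eventually (\<lambda>\<theta>. N * D / (C + \<theta> * D) \<le> D + P' - P) (at_right (0::real))"
    using cv_opt_segment_bound[OF opt N g s' r' C_pos]
    by (intro eventually_at_rightI[of 0 1]) (auto simp: C_def D_def P_def P'_def)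
  ultimately have "N * D / C \<le> D + P' - P"
    using tendsto_upperbound trivial_limit_at_right_real by fastforce
  then show ?thesis
    using C_pos by (simp add: C_def D_def P_def P'_def field_simps)
qed

lemma cv_opt_revenue_le:
  assumes opt: "cv_opt N g c0 c1 s r" and N: "0 \<le> N" and g: "0 < g"
  shows "revenue s r \<le> N"
proof (cases "revenue s r = 0")
  case False
  have box: "0 \<le> s" "0 \<le> r" "0 \<le> c0" "0 \<le> c1"
    using cv_opt_box[OF opt] by auto
  then have pos: "0 < revenue s r"
    using False revenue_nonneg[of s r] by simp
  have "(N - revenue s r) * (0 - revenue s r) \<le> revenue s r * (0 - reposition s r)"
    using cv_opt_first_order[OF opt N g, of 0 0] box pos by simp
  then have "revenue s r * reposition s r \<le> revenue s r * (N - revenue s r)"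
    by (simp add: algebra_simps)
  then have "0 \<le> revenue s r * (N - revenue s r)"
    using pos reposition_nonneg[of s r] by (meson mult_nonneg_nonneg less_imp_le order_trans)
  then show ?thesis
    using pos by (simp add: zero_le_mult_iff)
qed (use N in simp)

lemma revenue_split:
  "0 < q01 \<Longrightarrow> revenue s r = (m1 + m0 / q01 * q10) * r + m0 / q01 * (q01 * s - q10 * r)"
  unfolding revenue_def by (simp add: field_simps)

text \<open>Moving an optimum with a surplus in region 0 to the balanced point with the same \<open>r\<close> trades
  revenue at rate \<open>m0 / q01\<close> per unit of surplus against repositioning time at rate \<open>t10\<close>.\<close>

lemma cv_opt_surplus_revenue_le:
  assumes q01: "0 < q01" and opt: "cv_opt N g c0 c1 s r" and N: "0 < N" and g: "0 < g"
    and surplus: "q10 * r < q01 * s"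
  shows "(m0 / q01 + t10) * revenue s r \<le> m0 / q01 * N"
proof (cases "revenue s r = 0")
  case True
  then show ?thesis
    using N q01 m0_nonneg by simp
next
  case False
  define h D where "h = m0 / q01" and "D = q01 * s - q10 * r"
  have box: "0 \<le> s" "s \<le> c0" "0 \<le> r" "r \<le> c1"
    using cv_opt_box[OF opt] by auto
  then have pos: "0 < revenue s r"
    using False revenue_nonneg[of s r] by simp
  define s' where "s' = q10 * r / q01"
  have "s' \<le> s"
    using q01 surplus by (simp add: s'_def field_simps)
  then have s': "0 \<le> s'" "s' \<le> c0" and balanced: "q01 * s' = q10 * r"
    using q01 q10_nonneg box by (auto simp: s'_def)
  have "(N - revenue s r) * (revenue s' r - revenue s r) \<le> revenue s r * (reposition s' r - reposition s r)"
    using cv_opt_first_order[OF opt less_imp_le[OF N] g s' box(3,4) pos] .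
  moreover have "revenue s' r - revenue s r = - (h * D)"
    using revenue_split[OF q01, of s' r] revenue_split[OF q01, of s r] balanced
    by (simp add: h_def D_def algebra_simps)
  moreover have "reposition s' r - reposition s r = - (t10 * D)"
    using reposition_balanced[OF balanced] reposition_surplus[of r s] surplus by (simp add: D_def)
  ultimately have "(revenue s r * t10) * D \<le> ((N - revenue s r) * h) * D"
    by (simp add: algebra_simps)
  then have "revenue s r * t10 \<le> (N - revenue s r) * h"
    using surplus by (simp add: D_def mult_le_cancel_right)
  then show ?thesis
    by (simp add: h_def algebra_simps)
qed

lemma av_opt_box: "av_opt B0 B1 M s r \<Longrightarrow> 0 \<le> s \<and> s \<le> B0 \<and> 0 \<le> r \<and> r \<le> B1"
  unfolding av_opt_def by blast

lemma av_opt_budget: "av_opt B0 B1 M s r \<Longrightarrow> revenue s r + reposition s r \<le> M"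
  unfolding av_opt_def by blast

lemma av_opt_revenue_ge:
  "av_opt B0 B1 M s r \<Longrightarrow> 0 \<le> s' \<Longrightarrow> s' \<le> B0 \<Longrightarrow> 0 \<le> r' \<Longrightarrow> r' \<le> B1 \<Longrightarrow>
    revenue s' r' + reposition s' r' \<le> M \<Longrightarrow> revenue s' r' \<le> revenue s r"
  unfolding av_opt_def by blast

text \<open>Points of small revenue have very negative utility, so the maximum may be taken over the
  compact part of the box where the revenue is bounded away from 0.\<close>

lemma cv_opt_exists:
  assumes c: "0 \<le> c0" "0 \<le> c1" and g: "0 < g" and N: "0 < N" and pos: "0 < revenue c0 c1"
  shows "\<exists>s r. cv_opt N g c0 c1 s r"
proof -
  define F where "F = (\<lambda>z. cv_utility N g (fst z) (snd z))"
  define \<epsilon> where "\<epsilon> = min (revenue c0 c1) (exp (cv_utility N g c0 c1 / N) / g)"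
  define S where "S = ({0..c0} \<times> {0..c1}) \<inter> {z. \<epsilon> \<le> revenue (fst z) (snd z)}"
  have \<epsilon>: "0 < \<epsilon>"
    unfolding \<epsilon>_def using pos g by simp
  have "compact S"
    unfolding S_def revenue_def
    by (intro compact_Int_closed compact_Times compact_Icc closed_Collect_le continuous_intros)
  moreover have corner: "(c0, c1) \<in> S"
    unfolding S_def \<epsilon>_def using c by auto
  moreover have "continuous_on S F"
  proof -
    have "\<forall>z\<in>S. g * (m0 * fst z + m1 * snd z) \<noteq> 0"
      using \<epsilon> g by (auto simp: S_def revenue_def)
    then show ?thesis
      unfolding F_def cv_utility_def revenue_def reposition_def by (intro continuous_intros) auto
  qed
  ultimately obtain z where z: "z \<in> S" and z_max: "\<forall>y\<in>S. F y \<le> F z"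
    using continuous_attains_sup[of S F] by blast
  have "cv_opt N g c0 c1 (fst z) (snd z)"
    unfolding cv_opt_def
  proof (intro conjI allI impI)
    show "0 \<le> fst z" "fst z \<le> c0" "0 \<le> snd z" "snd z \<le> c1" "0 < revenue (fst z) (snd z)"
      using z \<epsilon> by (auto simp: S_def)
    fix s' r'
    assume s': "0 \<le> s'" "s' \<le> c0" and r': "0 \<le> r'" "r' \<le> c1" and rev: "0 < revenue s' r'"
    show "cv_utility N g s' r' \<le> cv_utility N g (fst z) (snd z)"
    proof (cases "\<epsilon> \<le> revenue s' r'")
      case True
      then show ?thesis
        using z_max s' r' by (force simp: S_def F_def)
    next
      case False
      then have "revenue s' r' < exp (cv_utility N g c0 c1 / N) / g"
        by (simp add: \<epsilon>_def)
      then have "g * revenue s' r' < exp (cv_utility N g c0 c1 / N)"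
        using g by (simp add: field_simps)
      then have "ln (g * revenue s' r') < ln (exp (cv_utility N g c0 c1 / N))"
        using g rev by (subst ln_less_cancel_iff) auto
      then have "ln (g * revenue s' r') < cv_utility N g c0 c1 / N"
        by simp
      then have "N * ln (g * revenue s' r') < cv_utility N g c0 c1"
        using N by (simp add: pos_less_divide_eq mult.commute)
      then have "cv_utility N g s' r' < F (c0, c1)"
        using rev reposition_nonneg[of s' r'] unfolding F_def cv_utility_def by simp
      then show ?thesis
        using z_max corner unfolding F_def by fastforce
    qed
  qed
  then show ?thesis by blast
qed

lemma two_region_swap: "two_region m1 m0 q10 q01 t10 t01"
  using m0_nonneg m1_nonneg q01_nonneg q10_nonneg t01_pos t10_pos m0_pos m1_pos
  by unfold_locales auto

lemma revenue_swap: "two_region.revenue m1 m0 r s = revenue s r"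
  by (simp add: two_region.revenue_def[OF two_region_swap] revenue_def)

lemma reposition_swap: "two_region.reposition q10 q01 t10 t01 r s = reposition s r"
  by (simp add: two_region.reposition_def[OF two_region_swap] reposition_def)

lemma cv_utility_swap: "two_region.cv_utility m1 m0 q10 q01 t10 t01 N g r s = cv_utility N g s r"
  by (simp add: two_region.cv_utility_def[OF two_region_swap] cv_utility_def revenue_swap
      reposition_swap)

lemma cv_opt_swap: "two_region.cv_opt m1 m0 q10 q01 t10 t01 N g c1 c0 r s \<longleftrightarrow> cv_opt N g c0 c1 s r"
  unfolding two_region.cv_opt_def[OF two_region_swap] cv_opt_def revenue_swap cv_utility_swap
  by blast

lemma av_opt_swap: "two_region.av_opt m1 m0 q10 q01 t10 t01 B1 B0 M r s \<longleftrightarrow> av_opt B0 B1 M s r"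
  unfolding two_region.av_opt_def[OF two_region_swap] av_opt_def revenue_swap reposition_swap
  by blast

end

section \<open>Comparing AV-first with OPT\<close>

lemma five_quarters_quadratic:
  fixes u K M T :: real
  assumes u: "0 < u" "u < 1" and K: "0 \<le> K" "K < 4 * u * M" and T: "M + u * K \<le> T"
  shows "K + u * M \<le> 5/4 * T"
proof -
  have "0 \<le> (5 - 4 * u) * (4 * u * M - K)"
    using u K by (intro mult_nonneg_nonneg) auto
  moreover have "0 \<le> K * (2 * u - 1)^2"
    using K by simp
  moreover have "4 * u * (5 * M + 5 * u * K - 4 * K - 4 * u * M)
      = (5 - 4 * u) * (4 * u * M - K) + 5 * (K * (2 * u - 1)^2)"
    by (simp add: algebra_simps power2_eq_square)
  ultimately have "0 \<le> 4 * u * (5 * M + 5 * u * K - 4 * K - 4 * u * M)"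
    by linarith
  then have "0 \<le> 5 * M + 5 * u * K - 4 * K - 4 * u * M"
    using u by (simp add: zero_le_mult_iff)
  then show ?thesis
    using T by linarith
qed

text \<open>The arithmetic core of the case of a binding AV budget (\<open>low_budget_bound\<close> below):
  \<open>a\<close>, \<open>c\<close> are the AV and CV revenues of OPT, \<open>k\<close> the balanced part of \<open>a\<close>, \<open>T\<close> the AV-first
  revenue, \<open>M\<close> the budget, \<open>K\<close> the balanced revenue and \<open>u * N\<close> a lower bound on the CV revenue
  after AV-first.\<close>

lemma five_quarters_bound:
  fixes u a c M N K T k :: real
  assumes u: "0 < u" "u < 1" and a: "a \<le> M" "a \<le> u * M + (1 - u) * k"
    and c: "0 \<le> c" "c \<le> N" "c \<le> K - k" and k: "0 \<le> k"
    and T: "K \<le> T" "M + u * N \<le> T"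
  shows "a + c \<le> 5/4 * T"
proof (cases "K \<le> N")
  case True
  have "a + c \<le> K + u * M - u * k"
    using a(2) c(3) by (simp add: algebra_simps)
  moreover have "0 \<le> u * k"
    using u k by simp
  moreover have "u * K \<le> u * N"
    using True u by simp
  ultimately have "a + c \<le> K + u * M" "M + u * K \<le> T"
    using T by linarith+
  moreover have "0 \<le> K"
    using c k by linarith
  ultimately show ?thesis
  proof (cases "K < 4 * u * M")
    case True
    then show ?thesis
      using five_quarters_quadratic[OF u \<open>0 \<le> K\<close> True \<open>M + u * K \<le> T\<close>] \<open>a + c \<le> K + u * M\<close>
      by linarith
  qed (use T in linarith)
next
  case False
  have "a + c \<le> (1 - u) * K + u * M + u * N"
  proof (cases "K - N \<le> k")
    case True
    then have "u * (K - N) \<le> u * k"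
      using u by simp
    then show ?thesis
      using a c by (simp add: algebra_simps)
  next
    case False
    then have "(1 - u) * k \<le> (1 - u) * (K - N)"
      using u by simp
    then show ?thesis
      using a c by (simp add: algebra_simps)
  qed
  moreover have "u * (1 - u) * N \<le> 1/4 * T"
  proof -
    have "u * (1 - u) \<le> 1/4"
      using zero_le_power2[of "u - 1/2"] by (simp add: power2_eq_square algebra_simps)
    moreover have "0 \<le> N" "N \<le> T"
      using False T c by linarith+
    ultimately show ?thesis
      using u by (intro mult_mono) auto
  qed
  moreover have "u * (M + u * N) \<le> u * T" "(1 - u) * K \<le> (1 - u) * T"
    using T u by simp_all
  ultimately show ?thesis
    by (simp add: algebra_simps)
qed

text \<open>Both sides are affine in \<open>R\<close>, and the inequality holds at \<open>R = 0\<close> and \<open>R = 1\<close>.\<close>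

lemma five_quarters_weighted:
  fixes a c A C R :: real
  assumes "a \<le> A" "0 \<le> a" "0 \<le> c" "a + c \<le> 5/4 * (A + C)" "0 \<le> R" "R \<le> 1"
  shows "a + R * c \<le> 5/4 * (A + R * C)"
proof (cases "4 * c \<le> 5 * C")
  case True
  then have "R * (4 * c) \<le> R * (5 * C)"
    using assms by (intro mult_left_mono) auto
  then show ?thesis
    using assms by (simp add: algebra_simps)
next
  case False
  then have "0 \<le> (1 - R) * (4 * c - 5 * C)"
    using assms by simp
  then show ?thesis
    using assms by (simp add: algebra_simps)
qed

text \<open>\<open>(sh, rh)\<close> is the AV-first solution and \<open>(sz, rz)\<close> the CV response to the residual demand
  \<open>(B0 - sh, B1 - rh)\<close>; \<open>(sa, ra)\<close> with the CV demand \<open>(c0, c1)\<close> is an arbitrary feasible point of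
  OPT and \<open>(sc, rc)\<close> the CV response to it.\<close>

locale profit_comparison = two_region +
  fixes N g B0 B1 M sh rh sz rz sa ra c0 c1 sc rc :: real
  assumes N_pos: "0 < N" and g_pos: "0 < g"
    and B0_nonneg: "0 \<le> B0" and B1_nonneg: "0 \<le> B1" and M_nonneg: "0 \<le> M"
    and av_first: "av_opt B0 B1 M sh rh"
    and cv_after: "cv_opt N g (B0 - sh) (B1 - rh) sz rz"
    and joint_av_box: "0 \<le> sa" "0 \<le> ra"
    and joint_av_budget: "revenue sa ra + reposition sa ra \<le> M"
    and joint_cv_demand: "0 \<le> c0" "0 \<le> c1" "sa + c0 \<le> B0" "ra + c1 \<le> B1"
    and joint_cv: "cv_opt N g c0 c1 sc rc"
begin

abbreviation "A \<equiv> revenue sh rh"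
abbreviation "C \<equiv> revenue sz rz"
abbreviation "A' \<equiv> revenue sa ra"
abbreviation "C' \<equiv> revenue sc rc"

lemma av_first_box: "0 \<le> sh" "sh \<le> B0" "0 \<le> rh" "rh \<le> B1"
  using av_opt_box[OF av_first] by auto

lemma cv_after_box: "0 \<le> sz" "sz \<le> B0 - sh" "0 \<le> rz" "rz \<le> B1 - rh"
  using cv_opt_box[OF cv_after] by auto

lemma joint_cv_box: "0 \<le> sc" "sc \<le> c0" "0 \<le> rc" "rc \<le> c1"
  using cv_opt_box[OF joint_cv] by auto

lemma A_nonneg: "0 \<le> A" and C_nonneg: "0 \<le> C" and A'_nonneg: "0 \<le> A'" and C'_nonneg: "0 \<le> C'"
  using revenue_nonneg av_first_box cv_after_box joint_av_box joint_cv_box by auto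

lemma A'_le_A: "A' \<le> A"
  using av_opt_revenue_ge[OF av_first joint_av_box(1) _ joint_av_box(2) _ joint_av_budget]
    joint_cv_demand by simp

lemma A'_le_M: "A' \<le> M"
  using joint_av_budget reposition_nonneg[of sa ra] by linarith

lemma C'_le_N: "C' \<le> N"
  using cv_opt_revenue_le[OF joint_cv _ g_pos] N_pos by simp

lemma le_five_quarters: "x \<le> A + C \<Longrightarrow> x \<le> 5/4 * (A + C)"
  using A_nonneg C_nonneg by simp

lemma joint_le_total: "A' + C' \<le> revenue B0 B1"
  using revenue_mono[of "sa + sc" B0 "ra + rc" B1] joint_cv_demand joint_cv_box
  by (simp add: revenue_def algebra_simps)

lemma residual_revenue: "revenue (B0 - sh) (B1 - rh) = revenue B0 B1 - A"
  by (rule revenue_diff)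

lemma degenerate_reposition: "q01 = 0 \<Longrightarrow> q10 = 0 \<Longrightarrow> reposition s r = 0"
  by (rule reposition_balanced) simp

lemma degenerate_av_first_revenue:
  assumes "q01 = 0" "q10 = 0"
  shows "min M (revenue B0 B1) \<le> A"
proof (cases "revenue B0 B1 \<le> M")
  case True
  then show ?thesis
    using av_opt_revenue_ge[OF av_first, of B0 B1] B0_nonneg B1_nonneg
      degenerate_reposition[OF assms] by simp
next
  case False
  define \<theta> where "\<theta> = M / revenue B0 B1"
  have \<theta>: "0 \<le> \<theta>" "\<theta> \<le> 1"
    using False M_nonneg by (auto simp: \<theta>_def)
  have "revenue (\<theta> * B0) (\<theta> * B1) = \<theta> * revenue B0 B1"
    by (simp add: revenue_def algebra_simps)
  also have "\<dots> = M"
    using False M_nonneg by (simp add: \<theta>_def)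
  finally have "revenue (\<theta> * B0) (\<theta> * B1) = M" .
  moreover have "0 \<le> \<theta> * B0" "\<theta> * B0 \<le> B0" "0 \<le> \<theta> * B1" "\<theta> * B1 \<le> B1"
    using \<theta> B0_nonneg B1_nonneg by (auto intro: mult_left_le_one_le)
  ultimately show ?thesis
    using av_opt_revenue_ge[OF av_first, of "\<theta> * B0" "\<theta> * B1"] degenerate_reposition[OF assms]
    by simp
qed

lemma degenerate_residual_alternative:
  assumes "q01 = 0" "q10 = 0"
  shows "N \<le> C \<or> revenue B0 B1 - A \<le> C"
proof (rule ccontr)
  assume "\<not> ?thesis"
  then have CN: "C < N" and CV: "C < revenue B0 B1 - A"
    by auto
  have box: "0 \<le> B0 - sh" "0 \<le> B1 - rh"
    using av_first_box by auto
  have "0 < revenue (B0 - sh) (B1 - rh)"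
    using CV C_nonneg residual_revenue by linarith
  then have "0 < C"
    by (rule cv_opt_revenue_pos[OF cv_after box(1) order_refl box(2) order_refl])
  then have "(N - C) * (revenue B0 B1 - A - C) \<le> 0"
    using cv_opt_first_order[OF cv_after _ g_pos box(1) order_refl box(2) order_refl] N_pos
      degenerate_reposition[OF assms] residual_revenue by simp
  moreover have "0 < (N - C) * (revenue B0 B1 - A - C)"
    using CN CV by simp
  ultimately show False
    by linarith
qed

lemma degenerate_bound:
  assumes "q01 = 0" "q10 = 0"
  shows "A' + C' \<le> A + C"
proof (cases "revenue B0 B1 \<le> A")
  case True
  then show ?thesis
    using joint_le_total C_nonneg by linarith
next
  case False
  then have "M \<le> A"
    using degenerate_av_first_revenue[OF assms] by linarith
  then show ?thesis
    using degenerate_residual_alternative[OF assms] A'_le_M C'_le_N joint_le_total by linarith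
qed

end

text \<open>In the oriented case \<open>h\<close> is the revenue per unit of surplus \<open>q01 * s - q10 * r\<close> and \<open>\<kappa>\<close>
  the revenue per unit of \<open>r\<close> at a balanced point, so that the total revenue \<open>K + U\<close> splits into
  a balanced part \<open>K\<close> and a surplus part \<open>U\<close>; \<open>V\<close> is the revenue of the residual demand.\<close>

locale oriented_comparison = profit_comparison +
  assumes q01_pos: "0 < q01" and oriented: "q10 * B1 \<le> q01 * B0"
begin

definition h :: real where "h = m0 / q01"

definition \<kappa> :: real where "\<kappa> = m1 + h * q10"

abbreviation "K \<equiv> \<kappa> * B1"
abbreviation "U \<equiv> h * (q01 * B0 - q10 * B1)"
abbreviation "V \<equiv> K + U - A"

lemma h_pos: "0 < h"
  using m0_pos q01_pos by (simp add: h_def)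

lemma h_q01: "h * q01 = m0"
  using q01_pos by (simp add: h_def)

lemma kappa_nonneg: "0 \<le> \<kappa>"
  using h_pos m1_nonneg q10_nonneg by (simp add: \<kappa>_def)

lemma revenue_eq: "revenue s r = \<kappa> * r + h * (q01 * s - q10 * r)"
  using revenue_split[OF q01_pos] by (simp add: \<kappa>_def h_def)

lemma revenue_total: "revenue B0 B1 = K + U"
  by (rule revenue_eq)

lemma residual_revenue_eq: "revenue (B0 - sh) (B1 - rh) = V"
  using residual_revenue revenue_total by simp

lemma surplus_revenue_le: "t10 * (revenue s r - \<kappa> * r) \<le> h * reposition s r"
proof -
  have "t10 * (revenue s r - \<kappa> * r) \<le> h * (t10 * max 0 (q01 * s - q10 * r))"
    using revenue_eq[of s r] h_pos t10_pos by (simp add: mult_left_mono)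
  also have "\<dots> \<le> h * reposition s r"
    using reposition_surplus_le h_pos by (intro mult_left_mono) auto
  finally show ?thesis .
qed

lemma budget_revenue_le:
  assumes "revenue s r + reposition s r \<le> M"
  shows "(h + t10) * revenue s r \<le> h * M + t10 * (\<kappa> * r)"
  using surplus_revenue_le[of s r] mult_left_mono[OF assms, of h] h_pos
  by (simp add: algebra_simps)

lemma C'_le_if_surplus: "q10 * rc < q01 * sc \<Longrightarrow> (h + t10) * C' \<le> h * N"
  using cv_opt_surplus_revenue_le[OF q01_pos joint_cv N_pos g_pos] by (simp add: h_def)

lemma C'_le_if_deficit: "q01 * sc \<le> q10 * rc \<Longrightarrow> C' \<le> \<kappa> * rc"
  using revenue_eq[of sc rc] h_pos by (simp add: mult_nonneg_nonpos)

lemma joint_balanced_le: "\<kappa> * ra + \<kappa> * rc \<le> K"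
  using mult_left_mono[OF joint_cv_demand(4), of \<kappa>] mult_left_mono[OF joint_cv_box(4), of \<kappa>]
    kappa_nonneg by (simp add: algebra_simps)

text \<open>The first-order condition of the CV problem at a point of the residual box with revenue \<open>V\<close>
  turns into a dichotomy for \<open>C\<close> once the repositioning time at the CV response is bounded below
  by its surplus revenue (\<open>surplus_revenue_le\<close>).\<close>

lemma residual_alternative:
  assumes s': "0 \<le> s'" "s' \<le> B0 - sh" and r': "0 \<le> r'" "r' \<le> B1 - rh"
    and rev': "revenue s' r' = V" and V_pos: "0 < V"
    and repo': "h * reposition s' r' \<le> t10 * (V - X)" and X: "\<kappa> * rz \<le> X"
  shows "V \<le> C \<or> h * N \<le> (h + t10) * C"
proof (rule ccontr)
  assume "\<not> ?thesis"
  then have CV: "C < V" and CN: "(h + t10) * C < h * N"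
    by auto
  have C_pos: "0 < C"
    using cv_opt_revenue_pos[OF cv_after s' r'] rev' V_pos by simp
  have "(N - C) * (V - C) \<le> C * (reposition s' r' - reposition sz rz)"
    using cv_opt_first_order[OF cv_after _ g_pos s' r' C_pos] rev' N_pos by simp
  then have "h * ((N - C) * (V - C)) \<le> C * (h * reposition s' r' - h * reposition sz rz)"
    using mult_left_mono[of _ _ h] h_pos by (fastforce simp: algebra_simps)
  moreover have "t10 * (C - X) \<le> h * reposition sz rz"
  proof -
    have "t10 * (\<kappa> * rz) \<le> t10 * X"
      using X t10_pos by simp
    moreover have "t10 * (C - X) = t10 * (C - \<kappa> * rz) + (t10 * (\<kappa> * rz) - t10 * X)"
      by (simp add: algebra_simps)
    ultimately show ?thesis
      using surplus_revenue_le[of sz rz] by linarith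
  qed
  then have "C * (h * reposition s' r' - h * reposition sz rz) \<le> C * (t10 * (V - C))"
    using repo' C_pos by (intro mult_left_mono) (auto simp: algebra_simps)
  ultimately have "(V - C) * (h * N - (h + t10) * C) \<le> 0"
    by (simp add: algebra_simps)
  moreover have "0 < (V - C) * (h * N - (h + t10) * C)"
    using CV CN by simp
  ultimately show False
    by linarith
qed

lemma bound_if_surplus:
  assumes "q10 * rc < q01 * sc" and "V \<le> C \<or> h * N \<le> (h + t10) * C"
  shows "A' + C' \<le> A + C"
  using assms(2)
proof
  assume "V \<le> C"
  then show ?thesis
    using joint_le_total revenue_total by linarith
next
  assume "h * N \<le> (h + t10) * C"
  then have "(h + t10) * C' \<le> (h + t10) * C"
    using C'_le_if_surplus[OF assms(1)] by linarith
  then have "C' \<le> C"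
    using h_pos t10_pos by (simp add: mult_le_cancel_left_pos)
  then show ?thesis
    using A'_le_A by linarith
qed

subsection \<open>Budget below the balanced revenue\<close>

lemma low_budget_av_first_revenue:
  assumes "M \<le> K"
  shows "A = M"
proof -
  have "M \<le> A"
  proof (cases "K = 0")
    case True
    then show ?thesis
      using assms A_nonneg by linarith
  next
    case False
    then have K_pos: "0 < K"
      using kappa_nonneg B1_nonneg by (simp add: less_le)
    define \<theta> s1 where "\<theta> = M / K" and "s1 = q10 * B1 / q01"
    define s r where "s = \<theta> * s1" and "r = \<theta> * B1"
    have \<theta>: "0 \<le> \<theta>" "\<theta> \<le> 1"
      using assms K_pos M_nonneg by (auto simp: \<theta>_def)
    have balanced: "q01 * s = q10 * r"
      using q01_pos by (simp add: s_def r_def s1_def)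
    have "s1 \<le> B0" "0 \<le> s1"
      using oriented q01_pos q10_nonneg B1_nonneg by (auto simp: s1_def field_simps)
    then have box: "0 \<le> s" "s \<le> B0" "0 \<le> r" "r \<le> B1"
      using \<theta> B1_nonneg unfolding s_def r_def by (auto intro: mult_left_le_one_le order_trans)
    have "revenue s r = \<theta> * K"
      using revenue_eq[of s r] balanced by (simp add: r_def)
    also have "\<dots> = M"
      using K_pos unfolding \<theta>_def by (metis less_irrefl nonzero_divide_eq_eq)
    finally have "revenue s r = M" .
    then show ?thesis
      using av_opt_revenue_ge[OF av_first box] reposition_balanced[OF balanced] by simp
  qed
  then show ?thesis
    using av_opt_budget[OF av_first] reposition_nonneg[of sh rh] by linarith
qed

lemma low_budget_av_first_balanced:
  assumes "M \<le> K"
  shows "q01 * sh = q10 * rh" and "A = \<kappa> * rh"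
proof -
  show balanced: "q01 * sh = q10 * rh"
    using low_budget_av_first_revenue[OF assms] av_opt_budget[OF av_first]
    by (intro reposition_le_0_imp_balanced) simp
  show "A = \<kappa> * rh"
    using revenue_eq[of sh rh] balanced by simp
qed

lemma low_budget_residual_alternative:
  assumes "M \<le> K"
  shows "N \<le> C \<or> K - A \<le> C"
proof (rule ccontr)
  assume "\<not> ?thesis"
  then have CN: "C < N" and CK: "C < K - A"
    by auto
  define s' where "s' = q10 * (B1 - rh) / q01"
  have balanced: "q01 * s' = q10 * (B1 - rh)"
    using q01_pos by (simp add: s'_def)
  have "q01 * s' \<le> q01 * (B0 - sh)"
    using balanced low_budget_av_first_balanced(1)[OF assms] oriented by (simp add: algebra_simps)
  then have "s' \<le> B0 - sh"
    using q01_pos by (metis mult_le_cancel_left_pos)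
  then have box: "0 \<le> s'" "s' \<le> B0 - sh" "0 \<le> B1 - rh"
    using q01_pos q10_nonneg av_first_box by (auto simp: s'_def)
  have rev': "revenue s' (B1 - rh) = K - A"
    using revenue_eq[of s' "B1 - rh"] balanced low_budget_av_first_balanced(2)[OF assms]
    by (simp add: algebra_simps)
  then have "0 < C"
    using cv_opt_revenue_pos[OF cv_after box(1,2,3) order_refl] CK C_nonneg by simp
  then have "(N - C) * (K - A - C) \<le> - (C * reposition sz rz)"
    using cv_opt_first_order[OF cv_after _ g_pos box(1,2,3) order_refl] N_pos rev'
      reposition_balanced[OF balanced] by simp
  moreover have "0 \<le> C * reposition sz rz"
    using C_nonneg reposition_nonneg by simp
  moreover have "0 < (N - C) * (K - A - C)"
    using CN CK by simp
  ultimately show False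
    by linarith
qed

lemma low_budget_corner_alternative:
  assumes "M \<le> K" and V_pos: "0 < V"
  shows "V \<le> C \<or> h * N \<le> (h + t10) * C"
proof (rule residual_alternative)
  note balanced = low_budget_av_first_balanced[OF assms(1)]
  show "0 \<le> B0 - sh" "B0 - sh \<le> B0 - sh" "0 \<le> B1 - rh" "B1 - rh \<le> B1 - rh"
    using av_first_box by auto
  show "revenue (B0 - sh) (B1 - rh) = V" "0 < V"
    using residual_revenue_eq V_pos by simp_all
  have "q01 * (B0 - sh) - q10 * (B1 - rh) = q01 * B0 - q10 * B1"
    using balanced(1) by (simp add: algebra_simps)
  then show "h * reposition (B0 - sh) (B1 - rh) \<le> t10 * (V - (K - A))"
    using reposition_surplus[of "B1 - rh" "B0 - sh"] oriented by simp
  show "\<kappa> * rz \<le> K - A"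
    using mult_left_mono[OF cv_after_box(4) kappa_nonneg] balanced(2) by (simp add: algebra_simps)
qed

lemma joint_av_revenue_le: "A' \<le> h / (h + t10) * M + (1 - h / (h + t10)) * (\<kappa> * ra)"
proof -
  have ht: "0 < h + t10"
    using h_pos t10_pos by simp
  then have "1 - h / (h + t10) = t10 / (h + t10)"
    by (simp add: field_simps)
  then have "h / (h + t10) * M + (1 - h / (h + t10)) * (\<kappa> * ra) = (h * M + t10 * (\<kappa> * ra)) / (h + t10)"
    by (simp add: add_divide_distrib)
  then show ?thesis
    using budget_revenue_le[OF joint_av_budget] ht by (simp add: pos_le_divide_eq mult.commute)
qed

lemma low_budget_bound:
  assumes "M \<le> K" and V_pos: "0 < V"
  shows "A' + C' \<le> 5/4 * (A + C)"
proof (cases "q10 * rc < q01 * sc")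
  case True
  then show ?thesis
    using bound_if_surplus low_budget_corner_alternative[OF assms] le_five_quarters by blast
next
  case False
  then have C'_le: "C' \<le> K - \<kappa> * ra"
    using C'_le_if_deficit joint_balanced_le by fastforce
  consider "N \<le> C" | "V \<le> C" | "K - A \<le> C" "h * N \<le> (h + t10) * C"
    using low_budget_residual_alternative[OF assms(1)] low_budget_corner_alternative[OF assms]
    by linarith
  then show ?thesis
  proof cases
    case 1
    then show ?thesis
      using A'_le_A C'_le_N le_five_quarters by fastforce
  next
    case 2
    then show ?thesis
      using joint_le_total revenue_total le_five_quarters by fastforce
  next
    case 3
    define u where "u = h / (h + t10)"
    have u: "0 < u" "u < 1"
      using h_pos t10_pos by (auto simp: u_def)
    have "u * N \<le> C"
      using 3(2) h_pos t10_pos by (simp add: u_def field_simps)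
    then have "M + u * N \<le> A + C" "K \<le> A + C"
      using 3(1) low_budget_av_first_revenue[OF assms(1)] by linarith+
    moreover have "A' \<le> u * M + (1 - u) * (\<kappa> * ra)"
      unfolding u_def by (rule joint_av_revenue_le)
    moreover have "0 \<le> \<kappa> * ra"
      using kappa_nonneg joint_av_box(2) by simp
    ultimately show ?thesis
      using five_quarters_bound[OF u A'_le_M _ C'_nonneg C'_le_N C'_le] by blast
  qed
qed

subsection \<open>Budget above the balanced revenue\<close>

text \<open>The AVs may serve all of region 1, balanced by \<open>q10 * B1 / q01\<close> in region 0, plus a surplus
  \<open>e\<close> in region 0 that costs \<open>(m0 + t10 * q01) * e\<close> of the budget.\<close>

lemma av_first_revenue_ge_surplus_point:
  assumes e: "0 \<le> e" "q10 * B1 / q01 + e \<le> B0" and budget: "(m0 + t10 * q01) * e \<le> M - K"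
  shows "K + m0 * e \<le> A"
proof -
  define s where "s = q10 * B1 / q01 + e"
  have box: "0 \<le> s" "s \<le> B0"
    using e q01_pos q10_nonneg B1_nonneg by (auto simp: s_def)
  have surplus: "q01 * s - q10 * B1 = q01 * e"
    using q01_pos by (simp add: s_def algebra_simps)
  have "revenue s B1 = K + h * (q01 * e)"
    using revenue_eq[of s B1] surplus by simp
  also have "\<dots> = K + m0 * e"
    using h_q01 by (simp add: mult.assoc[symmetric])
  finally have rev: "revenue s B1 = K + m0 * e" .
  have "0 \<le> q01 * e"
    using q01_pos e(1) by simp
  then have "q10 * B1 \<le> q01 * s"
    using surplus by linarith
  then have "reposition s B1 = t10 * (q01 * e)"
    using reposition_surplus surplus by simp
  moreover have "(m0 + t10 * q01) * e = m0 * e + t10 * (q01 * e)"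
    by (simp add: algebra_simps)
  ultimately have "revenue s B1 + reposition s B1 \<le> M"
    using rev budget by linarith
  then show ?thesis
    using av_opt_revenue_ge[OF av_first box B1_nonneg order_refl] rev by simp
qed

lemma high_budget_av_first_revenue:
  assumes "K < M" and V_pos: "0 < V"
  shows "h * M + t10 * K \<le> (h + t10) * A"
proof -
  define s1 where "s1 = q10 * B1 / q01"
  define e where "e = min (B0 - s1) ((M - K) / (m0 + t10 * q01))"
  have s1: "0 \<le> s1" "s1 \<le> B0" and balanced: "q01 * s1 = q10 * B1"
    using oriented q01_pos q10_nonneg B1_nonneg by (auto simp: s1_def field_simps)
  have den: "0 < m0 + t10 * q01"
    using m0_pos q01_pos t10_pos by (simp add: add_pos_pos)
  have "e \<le> (M - K) / (m0 + t10 * q01)"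
    by (simp add: e_def)
  then have "(m0 + t10 * q01) * e \<le> M - K"
    using den by (simp add: pos_le_divide_eq mult.commute)
  moreover have "0 \<le> e" "s1 + e \<le> B0"
    using s1 assms(1) den by (auto simp: e_def)
  ultimately have A_ge: "K + m0 * e \<le> A"
    using av_first_revenue_ge_surplus_point unfolding s1_def by blast
  have "e = (M - K) / (m0 + t10 * q01)"
  proof (rule ccontr)
    assume "e \<noteq> (M - K) / (m0 + t10 * q01)"
    then have "e = B0 - s1"
      unfolding e_def by (auto simp: min_def split: if_splits)
    then have "m0 * e = (h * q01) * (B0 - s1)"
      using h_q01 by simp
    then have "m0 * e = h * (q01 * B0 - q01 * s1)"
      by (simp add: algebra_simps)
    then have "m0 * e = U"
      using balanced by simp
    then show False
      using A_ge V_pos by linarith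
  qed
  then have "(m0 + t10 * q01) * (m0 * e) = m0 * (M - K)"
    using den by simp
  moreover have "(m0 + t10 * q01) * (K + m0 * e) \<le> (m0 + t10 * q01) * A"
    using A_ge den by simp
  ultimately have "(m0 + t10 * q01) * K + m0 * (M - K) \<le> (m0 + t10 * q01) * A"
    using distrib_left[of "m0 + t10 * q01" K "m0 * e"] by linarith
  then have "(h * q01 + t10 * q01) * K + (h * q01) * (M - K) \<le> (h * q01 + t10 * q01) * A"
    by (simp add: h_q01)
  then have "q01 * (h * M + t10 * K) \<le> q01 * ((h + t10) * A)"
    by (simp add: algebra_simps)
  then show ?thesis
    using q01_pos by simp
qed

lemma high_budget_full_service:
  assumes "K < M" and V_pos: "0 < V"
  shows "\<kappa> * (B1 - rh) = 0" and "m1 * (B1 - rh) = 0"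
proof -
  have "t10 * K \<le> t10 * (\<kappa> * rh)"
    using high_budget_av_first_revenue[OF assms] budget_revenue_le[OF av_opt_budget[OF av_first]]
    by linarith
  then have "K \<le> \<kappa> * rh"
    using t10_pos by simp
  moreover have "0 \<le> \<kappa> * (B1 - rh)"
    using kappa_nonneg av_first_box by simp
  moreover have "\<kappa> * (B1 - rh) = K - \<kappa> * rh"
    by (simp add: algebra_simps)
  ultimately show kappa_zero: "\<kappa> * (B1 - rh) = 0"
    by linarith
  have "0 \<le> m1 * (B1 - rh)" "0 \<le> h * q10 * (B1 - rh)"
    using m1_nonneg h_pos q10_nonneg av_first_box by auto
  moreover have "\<kappa> * (B1 - rh) = m1 * (B1 - rh) + h * q10 * (B1 - rh)"
    by (simp add: \<kappa>_def algebra_simps)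
  ultimately show "m1 * (B1 - rh) = 0"
    using kappa_zero by linarith
qed

lemma high_budget_corner_alternative:
  assumes "K < M" and V_pos: "0 < V"
  shows "V \<le> C \<or> h * N \<le> (h + t10) * C"
proof (rule residual_alternative)
  show box: "0 \<le> B0 - sh" "B0 - sh \<le> B0 - sh" "(0::real) \<le> 0" "0 \<le> B1 - rh"
    using av_first_box by auto
  show rev: "revenue (B0 - sh) 0 = V"
    using residual_revenue_eq high_budget_full_service(2)[OF assms] by (simp add: revenue_def)
  show "0 < V"
    by (rule V_pos)
  have "h * reposition (B0 - sh) 0 = t10 * (h * q01 * (B0 - sh))"
    using reposition_surplus[of 0 "B0 - sh"] box q01_pos by simp
  then show "h * reposition (B0 - sh) 0 \<le> t10 * (V - 0)"
    using rev h_q01 by (simp add: revenue_def)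
  show "\<kappa> * rz \<le> 0"
    using mult_left_mono[OF cv_after_box(4) kappa_nonneg] high_budget_full_service(1)[OF assms]
    by simp
qed

lemma high_budget_bound:
  assumes "K < M" and V_pos: "0 < V"
  shows "A' + C' \<le> A + C"
proof (cases "q10 * rc < q01 * sc")
  case True
  then show ?thesis
    using bound_if_surplus high_budget_corner_alternative[OF assms] by blast
next
  case False
  then have C'_le: "C' \<le> K - \<kappa> * ra"
    using C'_le_if_deficit joint_balanced_le by fastforce
  show ?thesis
  proof (cases "V \<le> C")
    case True
    then show ?thesis
      using joint_le_total revenue_total by linarith
  next
    case False
    then have CN: "h * N \<le> (h + t10) * C"
      using high_budget_corner_alternative[OF assms] by blast
    have "h * C' \<le> h * N" "t10 * C' \<le> t10 * (K - \<kappa> * ra)"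
      using C'_le_N C'_le h_pos t10_pos by simp_all
    moreover have "(h + t10) * (A' + C') = (h + t10) * A' + h * C' + t10 * C'"
      by (simp add: algebra_simps)
    ultimately have "(h + t10) * (A' + C') \<le> h * M + t10 * (\<kappa> * ra) + h * N + t10 * (K - \<kappa> * ra)"
      using budget_revenue_le[OF joint_av_budget] by linarith
    also have "\<dots> \<le> (h + t10) * (A + C)"
      using high_budget_av_first_revenue[OF assms] CN by (simp add: algebra_simps)
    finally show ?thesis
      using h_pos t10_pos by (simp add: mult_le_cancel_left_pos)
  qed
qed

lemma oriented_bound: "A' + C' \<le> 5/4 * (A + C)"
proof (cases "K + U \<le> A")
  case True
  then show ?thesis
    using joint_le_total revenue_total C_nonneg le_five_quarters by fastforce
next
  case False
  then have "0 < V"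
    by simp
  then show ?thesis
    using low_budget_bound high_budget_bound le_five_quarters by fastforce
qed

end

context profit_comparison
begin

lemma profit_comparison_swap:
  "profit_comparison m1 m0 q10 q01 t10 t01 N g B1 B0 M rh sh rz sz ra sa c1 c0 rc sc"
  using two_region_swap N_pos g_pos B0_nonneg B1_nonneg M_nonneg joint_av_box joint_cv_demand
    av_first cv_after joint_av_budget joint_cv
  by (simp add: profit_comparison_def profit_comparison_axioms_def av_opt_swap cv_opt_swap
      revenue_swap reposition_swap)

text \<open>Exchanging the two regions reduces the case \<open>q01 * B0 \<le> q10 * B1\<close> to the oriented one.\<close>

lemma total_bound: "A' + C' \<le> 5/4 * (A + C)"
proof -
  consider "0 < q01" "q10 * B1 \<le> q01 * B0" | "0 < q10" "q01 * B0 \<le> q10 * B1" | "q01 = 0" "q10 = 0"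
    using q01_nonneg q10_nonneg B0_nonneg B1_nonneg
    by (smt (verit) mult_eq_0_iff mult_nonneg_nonneg)
  then show ?thesis
  proof cases
    case 1
    interpret oriented_comparison m0 m1 q01 q10 t01 t10 N g B0 B1 M sh rh sz rz sa ra c0 c1 sc rc
      by unfold_locales (use 1 in auto)
    show ?thesis
      by (rule oriented_bound)
  next
    case 2
    interpret swapped: profit_comparison m1 m0 q10 q01 t10 t01 N g B1 B0 M rh sh rz sz ra sa c1 c0 rc sc
      by (rule profit_comparison_swap)
    interpret swapped: oriented_comparison m1 m0 q10 q01 t10 t01 N g B1 B0 M rh sh rz sz ra sa c1 c0 rc sc
      by unfold_locales (use 2 in auto)
    show ?thesis
      using swapped.oriented_bound by (simp add: revenue_swap)
  next
    case 3
    then show ?thesis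
      using degenerate_bound le_five_quarters by blast
  qed
qed

lemma weighted_bound:
  assumes "0 \<le> R" "R \<le> 1"
  shows "A' + R * C' \<le> 5/4 * (A + R * C)"
  using five_quarters_weighted[OF A'_le_A A'_nonneg C'_nonneg total_bound assms] .

end

section \<open>Two-region networks\<close>

lemma regs_2: "regs 2 = {0, 1}"
  by (auto simp: regs_def)

lemma sum_regs_2: "(\<Sum>i\<in>regs 2. f i) = f 0 + f (1::nat)"
  by (simp add: regs_2)

lemma ball_regs_2: "(\<forall>i\<in>regs 2. P i) \<longleftrightarrow> P 0 \<and> P (1::nat)"
  by (auto simp: regs_2)

lemma wsum_2: "wsum 2 w x = w 0 0 * x 0 0 + w 0 1 * x 0 1 + w 1 0 * x 1 0 + w 1 1 * x 1 1"
  unfolding wsum_def sum_regs_2 by simp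

lemma brow_2: "brow 2 b i = b i 0 + b i 1"
  unfolding brow_def sum_regs_2 by simp

lemma meantrip_2: "meantrip 2 b t a = qq 2 b a 0 * t a 0 + qq 2 b a 1 * t a 1"
  unfolding meantrip_def sum_regs_2 by simp

lemma nonneg_2: "nonneg 2 x \<longleftrightarrow> 0 \<le> x 0 0 \<and> 0 \<le> x 0 1 \<and> 0 \<le> x 1 0 \<and> 0 \<le> x 1 1"
  unfolding nonneg_def ball_regs_2 by auto

lemma flow_balance_2: "flow_balance 2 b x \<longleftrightarrow>
   (x 0 0 + x 1 0) * qq 2 b 0 0 + (x 0 1 + x 1 1) * qq 2 b 1 0 = x 0 0 + x 0 1 \<and>
   (x 0 0 + x 1 0) * qq 2 b 0 1 + (x 0 1 + x 1 1) * qq 2 b 1 1 = x 1 0 + x 1 1"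
  unfolding flow_balance_def ball_regs_2 sum_regs_2 by simp

definition served :: "(nat \<Rightarrow> nat \<Rightarrow> real) \<Rightarrow> nat \<Rightarrow> real" where
  "served x i = (\<Sum>j\<in>regs 2. x j i)"

lemma served_2: "served x i = x 0 i + x 1 i"
  unfolding served_def sum_regs_2 by simp

lemma served_nonneg: "nonneg 2 x \<Longrightarrow> 0 \<le> served x 0 \<and> 0 \<le> served x 1"
  unfolding nonneg_2 served_2 by simp

locale two_region_network =
  fixes b t :: "nat \<Rightarrow> nat \<Rightarrow> real"
  assumes demand_nonneg: "\<And>i j. i \<in> regs 2 \<Longrightarrow> j \<in> regs 2 \<Longrightarrow> 0 \<le> b i j"
    and demand_pos: "\<And>i. i \<in> regs 2 \<Longrightarrow> 0 < brow 2 b i"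
    and trip_nonneg: "\<And>i j. i \<in> regs 2 \<Longrightarrow> j \<in> regs 2 \<Longrightarrow> 0 \<le> t i j"
    and trip_pos: "\<And>i j. i \<in> regs 2 \<Longrightarrow> j \<in> regs 2 \<Longrightarrow> i \<noteq> j \<Longrightarrow> 0 < t i j"
begin

definition "m0 = meantrip 2 b t 0"
definition "m1 = meantrip 2 b t 1"
definition "q01 = qq 2 b 0 1"
definition "q10 = qq 2 b 1 0"
definition "t01 = t 0 1"
definition "t10 = t 1 0"
definition "B0 = brow 2 b 0"
definition "B1 = brow 2 b 1"

lemma regions: "(0::nat) \<in> regs 2" "(1::nat) \<in> regs 2"
  by (auto simp: regs_2)

lemma B0_pos: "0 < B0" and B1_pos: "0 < B1"
  using demand_pos regions by (auto simp: B0_def B1_def)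

lemma qq_nonneg: "i \<in> regs 2 \<Longrightarrow> j \<in> regs 2 \<Longrightarrow> 0 \<le> qq 2 b i j"
  unfolding qq_def using demand_nonneg demand_pos by (simp add: less_imp_le)

lemma qq_row_sum: "i \<in> regs 2 \<Longrightarrow> qq 2 b i 0 + qq 2 b i 1 = 1"
  unfolding qq_def using demand_pos[of i] brow_2[of b i] by (simp add: add_divide_distrib[symmetric])

lemma qq_00: "qq 2 b 0 0 = 1 - q01" and qq_11: "qq 2 b 1 1 = 1 - q10"
  using qq_row_sum regions by (auto simp: q01_def q10_def algebra_simps)

lemma q01_le_1: "q01 \<le> 1" and q10_le_1: "q10 \<le> 1"
  using qq_00 qq_11 qq_nonneg[of 0 0] qq_nonneg[of 1 1] regions by auto

sublocale two_region m0 m1 q01 q10 t01 t10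
proof
  show "0 \<le> m0" "0 \<le> m1" "0 \<le> q01" "0 \<le> q10" "0 < t01" "0 < t10"
    using qq_nonneg trip_nonneg trip_pos regions
    by (auto simp: m0_def m1_def q01_def q10_def t01_def t10_def meantrip_2)
  show "0 < m0" if "0 < q01"
  proof -
    have "0 \<le> qq 2 b 0 0 * t 0 0" "0 < qq 2 b 0 1 * t 0 1"
      using that qq_nonneg trip_nonneg trip_pos regions by (auto simp: q01_def)
    then show ?thesis
      by (simp add: m0_def meantrip_2)
  qed
  show "0 < m1" if "0 < q10"
  proof -
    have "0 \<le> qq 2 b 1 1 * t 1 1" "0 < qq 2 b 1 0 * t 1 0"
      using that qq_nonneg trip_nonneg trip_pos regions by (auto simp: q10_def)
    then show ?thesis
      by (simp add: m1_def meantrip_2)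
  qed
qed

lemma wsum_rA: "wsum 2 (rA 2 b t p 0) x = p * revenue (served x 0) (served x 1)"
  unfolding wsum_2 rA_def revenue_def served_2 by (simp add: m0_def m1_def algebra_simps)

lemma wsum_rC: "wsum 2 (rC 2 b t p 0 R) x = p * (1 - R) * revenue (served x 0) (served x 1)"
  unfolding wsum_2 rC_def revenue_def served_2 by (simp add: m0_def m1_def algebra_simps)

lemma wsum_rC2P: "wsum 2 (rC2P 2 b t p R) x = p * R * revenue (served x 0) (served x 1)"
  unfolding wsum_2 rC2P_def revenue_def served_2 by (simp add: m0_def m1_def algebra_simps)

lemma wsum_tau_dr:
  "wsum 2 (tau_dr 2 b t) x = revenue (served x 0) (served x 1) + t01 * x 0 1 + t10 * x 1 0"
  unfolding wsum_2 tau_dr_def revenue_def served_2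
  by (simp add: m0_def m1_def t01_def t10_def algebra_simps)

text \<open>Flow balance at region 0 says \<open>x 1 0 - x 0 1 = q01 * served x 0 - q10 * served x 1\<close>: the
  surplus has to be repositioned.\<close>

lemma reposition_le_flow:
  assumes "nonneg 2 x" "flow_balance 2 b x"
  shows "reposition (served x 0) (served x 1) \<le> t01 * x 0 1 + t10 * x 1 0"
proof -
  have "x 1 0 - x 0 1 = q01 * served x 0 - q10 * served x 1"
    using assms(2) unfolding flow_balance_2 qq_00 served_2 by (simp add: q10_def algebra_simps)
  then have "max 0 (q01 * served x 0 - q10 * served x 1) \<le> x 1 0"
    "max 0 (q10 * served x 1 - q01 * served x 0) \<le> x 0 1"
    using assms(1) by (auto simp: nonneg_2)
  then have "t10 * max 0 (q01 * served x 0 - q10 * served x 1) \<le> t10 * x 1 0"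
    "t01 * max 0 (q10 * served x 1 - q01 * served x 0) \<le> t01 * x 0 1"
    using t01_pos t10_pos by simp_all
  then show ?thesis
    unfolding reposition_def by linarith
qed

text \<open>The flow serving \<open>s\<close> pickups in region 0 and \<open>r\<close> in region 1 that repositions exactly the
  surplus.\<close>

definition flow_of :: "real \<Rightarrow> real \<Rightarrow> nat \<Rightarrow> nat \<Rightarrow> real" where
  "flow_of s r i a =
     (if i = 0 then (if a = 0 then s - max 0 (q01 * s - q10 * r) else max 0 (q10 * r - q01 * s))
      else (if a = 0 then max 0 (q01 * s - q10 * r) else r - max 0 (q10 * r - q01 * s)))"

lemma flow_of:
  assumes "0 \<le> s" "0 \<le> r"
  shows "nonneg 2 (flow_of s r)" "flow_balance 2 b (flow_of s r)"
    "served (flow_of s r) 0 = s" "served (flow_of s r) 1 = r"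
    "t01 * flow_of s r 0 1 + t10 * flow_of s r 1 0 = reposition s r"
proof -
  have "q01 * s \<le> s" "q10 * r \<le> r" "0 \<le> q01 * s" "0 \<le> q10 * r"
    using assms q01_nonneg q10_nonneg q01_le_1 q10_le_1 by (auto intro: mult_left_le_one_le)
  then show "nonneg 2 (flow_of s r)"
    unfolding nonneg_2 flow_of_def by simp
  have "max 0 (q01 * s - q10 * r) - max 0 (q10 * r - q01 * s) = q01 * s - q10 * r"
    by simp
  then show "flow_balance 2 b (flow_of s r)"
    unfolding flow_balance_2 qq_00 qq_11 flow_of_def q01_def[symmetric] q10_def[symmetric]
    by (simp add: algebra_simps)
  show "served (flow_of s r) 0 = s" "served (flow_of s r) 1 = r"
    "t01 * flow_of s r 0 1 + t10 * flow_of s r 1 0 = reposition s r"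
    unfolding served_2 flow_of_def reposition_def by simp_all
qed

lemma cv_obj_eq: "cv_obj 2 b t p 0 R N x =
   (if 0 < p * (1 - R) * revenue (served x 0) (served x 1)
    then ereal (N * ln (p * (1 - R) * revenue (served x 0) (served x 1))
                - (revenue (served x 0) (served x 1) + t01 * x 0 1 + t10 * x 1 0))
    else -\<infinity>)"
  unfolding cv_obj_def wsum_rC wsum_tau_dr by simp

lemma cv_obj_flow_of:
  assumes "0 \<le> s" "0 \<le> r" "0 < p * (1 - R)" "0 < revenue s r"
  shows "cv_obj 2 b t p 0 R N (flow_of s r) = ereal (cv_utility N (p * (1 - R)) s r)"
proof -
  have "0 < p * (1 - R) * revenue s r"
    using assms(3,4) by simp
  then show ?thesis
    unfolding cv_obj_eq flow_of(3,4)[OF assms(1,2)] if_P[OF \<open>0 < p * (1 - R) * revenue s r\<close>]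
    using flow_of(5)[OF assms(1,2)] by (simp add: cv_utility_def algebra_simps)
qed

lemma cv_obj_nonpos_revenue:
  assumes "0 < p * (1 - R)" "revenue (served x 0) (served x 1) \<le> 0"
  shows "cv_obj 2 b t p 0 R N x = -\<infinity>"
proof -
  have "\<not> 0 < p * (1 - R) * revenue (served x 0) (served x 1)"
    using mult_nonneg_nonpos[of "p * (1 - R)" "revenue (served x 0) (served x 1)"] assms by linarith
  then show ?thesis
    by (simp add: cv_obj_eq)
qed

lemma cv_obj_le_utility:
  assumes "nonneg 2 x" "flow_balance 2 b x"
  shows "cv_obj 2 b t p 0 R N x \<le> ereal (cv_utility N (p * (1 - R)) (served x 0) (served x 1))"
  using reposition_le_flow[OF assms] by (simp add: cv_obj_eq cv_utility_def)

lemma av_first_imp_av_opt: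
  assumes p: "0 < p" and av: "av_first 2 b t p 0 M x"
  shows "av_opt B0 B1 M (served x 0) (served x 1)"
proof -
  have x: "nonneg 2 x" "flow_balance 2 b x" "wsum 2 (tau_dr 2 b t) x \<le> M"
    "served x 0 \<le> B0" "served x 1 \<le> B1"
    using av by (auto simp: av_first_def av_feasible_def B0_def B1_def served_def[symmetric] ball_regs_2)
  have "revenue s r \<le> revenue (served x 0) (served x 1)"
    if s: "0 \<le> s" "s \<le> B0" and r: "0 \<le> r" "r \<le> B1"
      and budget: "revenue s r + reposition s r \<le> M" for s r
  proof -
    have "av_feasible 2 b t M (flow_of s r)"
      using flow_of[OF s(1) r(1)] s r budget
      by (simp add: av_feasible_def served_def[symmetric] ball_regs_2 wsum_tau_dr B0_def B1_def)
    then have "p * revenue s r \<le> p * revenue (served x 0) (served x 1)"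
      using av flow_of[OF s(1) r(1)] by (auto simp: av_first_def wsum_rA)
    then show ?thesis
      using p by simp
  qed
  moreover have "revenue (served x 0) (served x 1) + reposition (served x 0) (served x 1) \<le> M"
    using reposition_le_flow[OF x(1,2)] x(3) unfolding wsum_tau_dr by linarith
  ultimately show ?thesis
    using served_nonneg[OF x(1)] x(4,5) by (auto simp: av_opt_def)
qed

lemma cv_optimal_imp_cv_opt:
  assumes g: "0 < p * (1 - R)" and cv: "cv_optimal 2 b t p 0 R N bC x"
  shows "cv_opt N (p * (1 - R)) (bC 0) (bC 1) (served x 0) (served x 1)"
  unfolding cv_opt_def
proof (intro conjI allI impI)
  have x: "nonneg 2 x" "flow_balance 2 b x" "served x 0 \<le> bC 0" "served x 1 \<le> bC 1"
    using cv by (auto simp: cv_optimal_def cv_feasible_def served_def[symmetric] ball_regs_2)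
  then show "0 \<le> served x 0" "served x 0 \<le> bC 0" "0 \<le> served x 1" "served x 1 \<le> bC 1"
    using served_nonneg by auto
  fix s r
  assume s: "0 \<le> s" "s \<le> bC 0" and r: "0 \<le> r" "r \<le> bC 1" and rev: "0 < revenue s r"
  have "cv_feasible 2 b bC (flow_of s r)"
    using flow_of[OF s(1) r(1)] s r by (simp add: cv_feasible_def served_def[symmetric] ball_regs_2)
  then have "ereal (cv_utility N (p * (1 - R)) s r) \<le> cv_obj 2 b t p 0 R N x"
    using cv cv_obj_flow_of[OF s(1) r(1) g rev] by (auto simp: cv_optimal_def)
  then have "0 < p * (1 - R) * revenue (served x 0) (served x 1)"
    by (auto simp: cv_obj_eq split: if_splits)
  then show "0 < revenue (served x 0) (served x 1)"
    using g by (simp add: zero_less_mult_iff)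
  have "ereal (cv_utility N (p * (1 - R)) s r) \<le> ereal (cv_utility N (p * (1 - R)) (served x 0) (served x 1))"
    using \<open>ereal (cv_utility N (p * (1 - R)) s r) \<le> cv_obj 2 b t p 0 R N x\<close> cv_obj_le_utility[OF x(1,2)]
    by (rule order_trans)
  then show "cv_utility N (p * (1 - R)) s r \<le> cv_utility N (p * (1 - R)) (served x 0) (served x 1)"
    by simp
qed

lemma cv_optimal_exists:
  assumes g: "0 < p * (1 - R)" and N: "0 < N" and bC: "0 \<le> bC 0" "0 \<le> bC 1"
  shows "\<exists>x. cv_optimal 2 b t p 0 R N bC x"
proof (cases "0 < revenue (bC 0) (bC 1)")
  case True
  obtain s r where opt: "cv_opt N (p * (1 - R)) (bC 0) (bC 1) s r"
    using cv_opt_exists[OF bC g N True] by blast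
  have box: "0 \<le> s" "s \<le> bC 0" "0 \<le> r" "r \<le> bC 1"
    using cv_opt_box[OF opt] by auto
  have rev: "0 < revenue s r"
    using cv_opt_revenue_pos[OF opt bC(1) order_refl bC(2) order_refl True] .
  have "cv_obj 2 b t p 0 R N y \<le> cv_obj 2 b t p 0 R N (flow_of s r)" if y: "cv_feasible 2 b bC y" for y
  proof (cases "0 < revenue (served y 0) (served y 1)")
    case True
    have y: "nonneg 2 y" "flow_balance 2 b y" "served y 0 \<le> bC 0" "served y 1 \<le> bC 1"
      using y by (auto simp: cv_feasible_def served_def[symmetric] ball_regs_2)
    have "cv_obj 2 b t p 0 R N y \<le> ereal (cv_utility N (p * (1 - R)) (served y 0) (served y 1))"
      by (rule cv_obj_le_utility[OF y(1,2)])
    also have "\<dots> \<le> ereal (cv_utility N (p * (1 - R)) s r)"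
      using cv_opt_utility_le[OF opt _ y(3) _ y(4) True] served_nonneg[OF y(1)] by simp
    also have "\<dots> = cv_obj 2 b t p 0 R N (flow_of s r)"
      using cv_obj_flow_of[OF box(1,3) g rev] by simp
    finally show ?thesis .
  next
    case False
    then show ?thesis
      using cv_obj_nonpos_revenue[OF g] by simp
  qed
  moreover have "cv_feasible 2 b bC (flow_of s r)"
    using flow_of[OF box(1,3)] box by (simp add: cv_feasible_def served_def[symmetric] ball_regs_2)
  ultimately show ?thesis
    unfolding cv_optimal_def by blast
next
  case False
  have "cv_obj 2 b t p 0 R N y \<le> cv_obj 2 b t p 0 R N (flow_of 0 0)" if y: "cv_feasible 2 b bC y" for y
  proof -
    have "served y 0 \<le> bC 0" "served y 1 \<le> bC 1"
      using y by (auto simp: cv_feasible_def served_def[symmetric] ball_regs_2)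
    then have "revenue (served y 0) (served y 1) \<le> 0"
      using revenue_mono False by (meson not_less order_trans)
    then show ?thesis
      using cv_obj_nonpos_revenue[OF g] by simp
  qed
  moreover have "cv_feasible 2 b bC (flow_of 0 0)"
    using flow_of[of 0 0] bC by (simp add: cv_feasible_def served_def[symmetric] ball_regs_2)
  ultimately show ?thesis
    unfolding cv_optimal_def by blast
qed

lemma cv_pi_attained:
  assumes "0 < p * (1 - R)" "0 < N" "0 \<le> bC 0" "0 \<le> bC 1"
  obtains x where "cv_optimal 2 b t p 0 R N bC x"
    and "cv_pi 2 b t p 0 R N bC = p * R * revenue (served x 0) (served x 1)"
proof -
  have "\<exists>v x. cv_optimal 2 b t p 0 R N bC x \<and> v = wsum 2 (rC2P 2 b t p R) x"
    using cv_optimal_exists[OF assms] by blast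
  from someI_ex[OF this] show ?thesis
    using that unfolding cv_pi_def wsum_rC2P by blast
qed

lemma joint_profit_le:
  assumes p: "0 < p" and R: "0 < R" "R < 1" and N: "0 < N" and M: "0 \<le> M"
    and av: "av_first 2 b t p 0 M x" and joint: "opt_feasible 2 b t M bC xA"
  shows "wsum 2 (rA 2 b t p 0) xA + cv_pi 2 b t p 0 R N bC \<le> 5/4 * avfirst_profit 2 b t p 0 R N x"
proof -
  define res where "res i = brow 2 b i - served x i" for i
  have g: "0 < p * (1 - R)"
    using p R by simp
  have av_opt: "av_opt B0 B1 M (served x 0) (served x 1)"
    by (rule av_first_imp_av_opt[OF p av])
  then have res: "0 \<le> res 0" "0 \<le> res 1"
    using av_opt_box by (auto simp: res_def B0_def B1_def)
  obtain z where z: "cv_optimal 2 b t p 0 R N res z"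
    and pi_res: "cv_pi 2 b t p 0 R N res = p * R * revenue (served z 0) (served z 1)"
    using cv_pi_attained[OF g N res] .
  have xA: "nonneg 2 xA" "flow_balance 2 b xA" "wsum 2 (tau_dr 2 b t) xA \<le> M"
    and bC: "0 \<le> bC 0" "0 \<le> bC 1" "served xA 0 + bC 0 \<le> B0" "served xA 1 + bC 1 \<le> B1"
    using joint by (auto simp: opt_feasible_def served_def[symmetric] ball_regs_2 B0_def B1_def)
  obtain c where c: "cv_optimal 2 b t p 0 R N bC c"
    and pi_bC: "cv_pi 2 b t p 0 R N bC = p * R * revenue (served c 0) (served c 1)"
    using cv_pi_attained[OF g N bC(1,2)] .
  interpret profit_comparison m0 m1 q01 q10 t01 t10 N "p * (1 - R)" B0 B1 M "served x 0" "served x 1"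
    "served z 0" "served z 1" "served xA 0" "served xA 1" "bC 0" "bC 1" "served c 0" "served c 1"
  proof
    show "cv_opt N (p * (1 - R)) (B0 - served x 0) (B1 - served x 1) (served z 0) (served z 1)"
      using cv_optimal_imp_cv_opt[OF g z] by (simp add: res_def B0_def B1_def)
    show "revenue (served xA 0) (served xA 1) + reposition (served xA 0) (served xA 1) \<le> M"
      using reposition_le_flow[OF xA(1,2)] xA(3) unfolding wsum_tau_dr by linarith
  qed (use N g B0_pos B1_pos M av_opt served_nonneg[OF xA(1)] bC cv_optimal_imp_cv_opt[OF g c]
       in auto)
  have "p * (A' + R * C') \<le> p * (5/4 * (A + R * C))"
    using weighted_bound R p by simp
  then show ?thesis
    unfolding avfirst_profit_def served_def[symmetric] res_def[symmetric] wsum_rA pi_res pi_bC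
    by (simp add: algebra_simps)
qed

end

lemma valid_network_two_region_network:
  "valid_network 2 b t p c R N M \<Longrightarrow> two_region_network b t"
  unfolding valid_network_def by unfold_locales auto

lemma opt_feasible_zero: "valid_network 2 b t p c R N M \<Longrightarrow> opt_feasible 2 b t M (\<lambda>_. 0) (\<lambda>_ _. 0)"
  unfolding valid_network_def opt_feasible_def nonneg_def flow_balance_def wsum_def
  by (auto simp: less_imp_le)

lemma joint_profits_bounded:
  assumes vn: "valid_network 2 b t p 0 R N M" and av: "av_first 2 b t p 0 M x"
  shows "\<forall>v \<in> {wsum 2 (rA 2 b t p 0) xA + cv_pi 2 b t p 0 R N bC | bC xA. opt_feasible 2 b t M bC xA}.
           v \<le> 5/4 * avfirst_profit 2 b t p 0 R N x"
proof -
  interpret two_region_network b t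
    using valid_network_two_region_network[OF vn] .
  show ?thesis
    using vn joint_profit_le[OF _ _ _ _ _ av] by (auto simp: valid_network_def)
qed

lemma opt_value_le:
  assumes vn: "valid_network 2 b t p 0 R N M" and av: "av_first 2 b t p 0 M x"
  shows "4/5 * opt_value 2 b t p 0 R N M \<le> avfirst_profit 2 b t p 0 R N x"
proof -
  have "opt_value 2 b t p 0 R N M \<le> 5/4 * avfirst_profit 2 b t p 0 R N x"
    unfolding opt_value_def using joint_profits_bounded[OF vn av] opt_feasible_zero[OF vn]
    by (intro cSup_least) auto
  then show ?thesis
    by simp
qed

lemma opt_value_ge:
  assumes vn: "valid_network 2 b t p 0 R N M" and av: "av_first 2 b t p 0 M x"
    and joint: "opt_feasible 2 b t M bC xA"
  shows "wsum 2 (rA 2 b t p 0) xA + cv_pi 2 b t p 0 R N bC \<le> opt_value 2 b t p 0 R N M"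
proof -
  let ?S = "{wsum 2 (rA 2 b t p 0) xA + cv_pi 2 b t p 0 R N bC | bC xA. opt_feasible 2 b t M bC xA}"
  have "bdd_above ?S"
    using joint_profits_bounded[OF vn av] unfolding bdd_above_def by blast
  then show ?thesis
    unfolding opt_value_def using joint by (intro cSup_upper) blast+
qed

section \<open>A network with performance loss close to 20%\<close>

lemma ln_less_minus_one: "0 < x \<Longrightarrow> x \<noteq> 1 \<Longrightarrow> ln x < x - 1"
  for x :: real
  using ln_le_minus_one ln_eq_minus_one by fastforce

interpretation unit_region: two_region 1 1 1 1 1 1
  by unfold_locales auto

lemma unit_reposition: "unit_region.reposition s r = \<bar>s - r\<bar>"
  unfolding unit_region.reposition_def by (simp add: max_def)

lemma unit_cv_revenue_le:
  assumes g: "0 < g" and opt: "unit_region.cv_opt 1 g (3/4) (1/4) s r"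
  shows "unit_region.revenue s r \<le> 1/2"
proof (rule ccontr)
  define w where "w = unit_region.revenue s r"
  assume "\<not> ?thesis"
  then have w: "1/2 < w"
    by (simp add: w_def)
  have "r \<le> 1/4" "w = s + r"
    using unit_region.cv_opt_box[OF opt] by (simp_all add: w_def unit_region.revenue_def)
  then have "unit_region.cv_utility 1 g s r \<le> ln (g * w) - 2 * w + 1/2"
    unfolding unit_region.cv_utility_def unit_reposition w_def[symmetric] by linarith
  moreover have "ln (g / 2 * (2 * w)) = ln (g / 2) + ln (2 * w)"
    using g w by (intro ln_mult_pos) auto
  then have "ln (g * w) = ln (g / 2) + ln (2 * w)"
    by simp
  moreover have "ln (2 * w) < 2 * w - 1"
    using ln_less_minus_one[of "2 * w"] w by simp
  moreover have "unit_region.cv_utility 1 g (1/4) (1/4) \<le> unit_region.cv_utility 1 g s r"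
    by (rule unit_region.cv_opt_utility_le[OF opt]) (simp_all add: unit_region.revenue_def)
  moreover have "unit_region.cv_utility 1 g (1/4) (1/4) = ln (g / 2) - 1/2"
    by (simp add: unit_region.cv_utility_def unit_region.revenue_def unit_reposition)
  ultimately show False
    by linarith
qed

lemma unit_cv_revenue_ge:
  assumes g: "0 < g" and opt: "unit_region.cv_opt 1 g (3/4) (1/2) s r"
  shows "1 \<le> unit_region.revenue s r"
proof (rule ccontr)
  define w where "w = unit_region.revenue s r"
  assume "\<not> ?thesis"
  then have w: "w < 1"
    by (simp add: w_def)
  have w_pos: "0 < w"
    using unit_region.cv_opt_revenue_pos[OF opt, of "1/2" "1/2"]
    by (simp add: w_def unit_region.revenue_def)
  have "unit_region.cv_utility 1 g s r \<le> ln (g * w) - w"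
    unfolding unit_region.cv_utility_def w_def[symmetric] using unit_region.reposition_nonneg by simp
  moreover have "ln (g * w) = ln g + ln w"
    using g w_pos by (simp add: ln_mult)
  moreover have "ln w < w - 1"
    using ln_less_minus_one w_pos w by simp
  moreover have "unit_region.cv_utility 1 g (1/2) (1/2) \<le> unit_region.cv_utility 1 g s r"
    by (rule unit_region.cv_opt_utility_le[OF opt]) (simp_all add: unit_region.revenue_def)
  moreover have "unit_region.cv_utility 1 g (1/2) (1/2) = ln g - 1"
    by (simp add: unit_region.cv_utility_def unit_region.revenue_def unit_reposition)
  ultimately show False
    by linarith
qed

text \<open>With AV fleet mass 1/2 the AV-first policy serves 1/4 in
  each region without repositioning, and the residual demand \<open>(3/4, 1/4)\<close> earns the CVs at most
  1/2. OPT instead lets the AVs serve 1/4 in region 0 only, repositioning back, and leaves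
  \<open>(3/4, 1/2)\<close> to the CVs, who then earn at least 1. As \<open>R \<rightarrow> 1\<close> the profits approach
  1 and 5/4.\<close>

definition example_demand :: "nat \<Rightarrow> nat \<Rightarrow> real" where
  "example_demand i j = (if i = 0 \<and> j = 1 then 1 else if i = 1 \<and> j = 0 then 1/2 else 0)"

definition example_trip_time :: "nat \<Rightarrow> nat \<Rightarrow> real" where
  "example_trip_time i j = (if i = j then 0 else 1)"

lemma example_valid: "0 < R \<Longrightarrow> R < 1 \<Longrightarrow> valid_network 2 example_demand example_trip_time 1 0 R 1 (1/2)"
  unfolding valid_network_def ball_regs_2 brow_2 example_demand_def example_trip_time_def by auto

interpretation example: two_region_network example_demand example_trip_time
  using valid_network_two_region_network[OF example_valid[of "1/2"]] by simp

lemma example_parameters: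
  "example.m0 = 1" "example.m1 = 1" "example.q01 = 1" "example.q10 = 1" "example.t01 = 1"
  "example.t10 = 1" "example.B0 = 1" "example.B1 = 1/2"
  by (simp_all add: example.m0_def example.m1_def example.q01_def example.q10_def example.t01_def
      example.t10_def example.B0_def example.B1_def meantrip_2 qq_def brow_2 example_demand_def
      example_trip_time_def)

lemma example_av_first:
  "av_first 2 example_demand example_trip_time 1 0 (1/2) (example.flow_of (1/4) (1/4))"
  unfolding av_first_def
proof (intro conjI allI impI)
  define x where "x = example.flow_of (1/4) (1/4)"
  note x = example.flow_of[of "1/4" "1/4", folded x_def]
  have rev_x: "unit_region.revenue (served x 0) (served x 1) = 1/2"
    using x by (simp add: unit_region.revenue_def)
  show "av_feasible 2 example_demand example_trip_time (1/2) x"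
    using x rev_x example.wsum_tau_dr[of x]
    by (simp add: av_feasible_def served_def[symmetric] ball_regs_2 brow_2 example_demand_def
        example_parameters unit_reposition)
  fix y
  assume "av_feasible 2 example_demand example_trip_time (1/2) y"
  then have "nonneg 2 y" "wsum 2 (tau_dr 2 example_demand example_trip_time) y \<le> 1/2"
    by (auto simp: av_feasible_def)
  then have "unit_region.revenue (served y 0) (served y 1) \<le> 1/2"
    using example.wsum_tau_dr[of y] by (simp add: nonneg_2 example_parameters)
  then show "wsum 2 (rA 2 example_demand example_trip_time 1 0) y
      \<le> wsum 2 (rA 2 example_demand example_trip_time 1 0) x"
    using rev_x by (simp add: example.wsum_rA example_parameters)
qed

lemma example_avfirst_profit:
  assumes R: "0 < R" "R < 1"
  shows "avfirst_profit 2 example_demand example_trip_time 1 0 R 1 (example.flow_of (1/4) (1/4))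
           \<le> 1/2 + R/2"
proof -
  define x where "x = example.flow_of (1/4) (1/4)"
  define res where "res i = brow 2 example_demand i - served x i" for i
  note x = example.flow_of[of "1/4" "1/4", folded x_def]
  have res: "res 0 = 3/4" "res 1 = 1/4"
    using x by (simp_all add: res_def brow_2 example_demand_def)
  obtain z where z: "cv_optimal 2 example_demand example_trip_time 1 0 R 1 res z"
    and pi: "cv_pi 2 example_demand example_trip_time 1 0 R 1 res
               = 1 * R * unit_region.revenue (served z 0) (served z 1)"
    using example.cv_pi_attained[of 1 R 1 res] R res by (auto simp: example_parameters)
  have "unit_region.cv_opt 1 (1 - R) (res 0) (res 1) (served z 0) (served z 1)"
    using example.cv_optimal_imp_cv_opt[of 1 R 1 res z] z R by (simp add: example_parameters)
  then have "unit_region.revenue (served z 0) (served z 1) \<le> 1/2"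
    unfolding res by (rule unit_cv_revenue_le[rotated]) (use R in simp)
  then have "R * unit_region.revenue (served z 0) (served z 1) \<le> R * (1/2)"
    using R by (intro mult_left_mono) auto
  then show ?thesis
    using x pi unfolding avfirst_profit_def served_def[symmetric] res_def[symmetric] x_def[symmetric]
    by (simp add: example.wsum_rA example_parameters unit_region.revenue_def)
qed

lemma example_opt_value:
  assumes R: "0 < R" "R < 1"
  shows "1/4 + R \<le> opt_value 2 example_demand example_trip_time 1 0 R 1 (1/2)"
proof -
  define xA where "xA = example.flow_of (1/4) 0"
  define bC :: "nat \<Rightarrow> real" where "bC i = (if i = 0 then 3/4 else 1/2)" for i
  note xA = example.flow_of[of "1/4" 0, folded xA_def]
  have "opt_feasible 2 example_demand example_trip_time (1/2) bC xA"
    using xA example.wsum_tau_dr[of xA]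
    by (simp add: opt_feasible_def served_def[symmetric] ball_regs_2 brow_2 example_demand_def
        bC_def example_parameters unit_reposition unit_region.revenue_def)
  then have "wsum 2 (rA 2 example_demand example_trip_time 1 0) xA
      + cv_pi 2 example_demand example_trip_time 1 0 R 1 bC
      \<le> opt_value 2 example_demand example_trip_time 1 0 R 1 (1/2)"
    using opt_value_ge[OF example_valid[OF R] example_av_first] by blast
  moreover obtain c where c: "cv_optimal 2 example_demand example_trip_time 1 0 R 1 bC c"
    and pi: "cv_pi 2 example_demand example_trip_time 1 0 R 1 bC
               = 1 * R * unit_region.revenue (served c 0) (served c 1)"
    using example.cv_pi_attained[of 1 R 1 bC] R by (auto simp: example_parameters bC_def)
  moreover have "unit_region.cv_opt 1 (1 - R) (3/4) (1/2) (served c 0) (served c 1)"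
    using example.cv_optimal_imp_cv_opt[of 1 R 1 bC c] c R by (simp add: example_parameters bC_def)
  then have "1 \<le> unit_region.revenue (served c 0) (served c 1)"
    by (rule unit_cv_revenue_ge[rotated]) (use R in simp)
  then have "R * 1 \<le> R * unit_region.revenue (served c 0) (served c 1)"
    using R by (intro mult_left_mono) auto
  ultimately show ?thesis
    using xA by (simp add: example.wsum_rA example_parameters unit_region.revenue_def)
qed

lemma four_fifths_approached:
  fixes \<epsilon> :: real
  assumes "0 < \<epsilon>"
  obtains R where "0 < R" "R < 1" "1/2 + R/2 < (4/5 + \<epsilon>) * (1/4 + R)"
proof -
  define d where "d = min \<epsilon> 1 / 4"
  define R where "R = 1 - d"
  have d: "0 < d" "d \<le> 1/4" "d \<le> \<epsilon> / 4"
    using assms by (auto simp: d_def)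
  have "\<epsilon> * d \<le> \<epsilon> / 4"
    using assms d by (simp add: mult_left_le)
  moreover have "(4/5 + \<epsilon>) * (1/4 + R) = 1 + 5/4 * \<epsilon> - 4/5 * d - \<epsilon> * d"
    by (simp add: R_def algebra_simps)
  ultimately have "1/2 + R/2 < (4/5 + \<epsilon>) * (1/4 + R)"
    using assms d R_def by linarith
  then show ?thesis
    using that[of R] d by (simp add: R_def)
qed

theorem proposition7:
  shows "(\<forall>b t p R N M x. valid_network 2 b t p 0 R N M \<and> av_first 2 b t p 0 M x \<longrightarrow>
            4/5 * opt_value 2 b t p 0 R N M \<le> avfirst_profit 2 b t p 0 R N x) \<and>
         (\<forall>\<epsilon>::real. 0 < \<epsilon> \<longrightarrow>
            (\<exists>b t p R N M x. valid_network 2 b t p 0 R N M \<and> av_first 2 b t p 0 M x \<and>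
               0 < opt_value 2 b t p 0 R N M \<and>
               avfirst_profit 2 b t p 0 R N x < (4/5 + \<epsilon>) * opt_value 2 b t p 0 R N M))"
proof (intro conjI allI impI)
  fix b t p R N M x
  assume "valid_network 2 b t p 0 R N M \<and> av_first 2 b t p 0 M x"
  then show "4/5 * opt_value 2 b t p 0 R N M \<le> avfirst_profit 2 b t p 0 R N x"
    using opt_value_le by blast
next
  fix \<epsilon> :: real
  assume "0 < \<epsilon>"
  then obtain R where R: "0 < R" "R < 1" and ratio: "1/2 + R/2 < (4/5 + \<epsilon>) * (1/4 + R)"
    using four_fifths_approached by blast
  let ?opt = "opt_value 2 example_demand example_trip_time 1 0 R 1 (1/2)"
  let ?x = "example.flow_of (1/4) (1/4)"
  have opt: "1/4 + R \<le> ?opt"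
    using example_opt_value[OF R] .
  have "avfirst_profit 2 example_demand example_trip_time 1 0 R 1 ?x \<le> 1/2 + R/2"
    using example_avfirst_profit[OF R] .
  also note ratio
  also have "(4/5 + \<epsilon>) * (1/4 + R) \<le> (4/5 + \<epsilon>) * ?opt"
    using opt \<open>0 < \<epsilon>\<close> by (intro mult_left_mono) auto
  finally show "\<exists>b t p R N M x. valid_network 2 b t p 0 R N M \<and> av_first 2 b t p 0 M x \<and>
      0 < opt_value 2 b t p 0 R N M \<and>
      avfirst_profit 2 b t p 0 R N x < (4/5 + \<epsilon>) * opt_value 2 b t p 0 R N M"
    using example_valid[OF R] example_av_first opt R by (intro exI conjI) auto
qed

end
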